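(* Let $n\geq2$ be an integer, $b:=-n+i$, $D=\{0,m\}$ with $2\le m\le n^2$. Let $\alpha\in E_{n,D}$ and suppose there is exactly one sequence $(\alpha_j)_{j\ge1}$ with $\alpha_j\in\{0,\pm m\}$ and $\alpha=\sum_{j\ge1}\alpha_jb^{-j}$. Let $p\ge1$ and integers $a_1,\ldots,a_p$ and nonnegative integers $u_1,\ldots,u_p$ be such that $(m-|\alpha_j|)_{j\ge1}$ equals $a_1,\ldots,a_p$ followed by the infinite repetition of $a_1+u_1,\ldots,a_p+u_p$. Then, with $C(\alpha):=C_{n,D}\cap(C_{n,D}+\alpha)$, $$\dim_BC(\alpha)=\dim_HC(\alpha)=\dim_PC(\alpha)=\frac{\log 2\sum_{\ell=1}^p(a_\ell+u_\ell)}{mp\log|b|}.$$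
   Context: $C_{n,D}$ is the attractor of $\{z\mapsto b^{-1}(z+d): d\in D\}$, i.e. $C_{n,D}=\{\sum_{j\ge1}d_jb^{-j}:d_j\in D\}$. $E_{n,D}$ is the attractor of $\{z\mapsto b^{-1}(z+\delta):\delta\in D-D\}$. $\dim_B,\dim_H,\dim_P$ denote box-counting, Hausdorff and packing dimension. *)

theory Defs
  imports "HOL-Analysis.Analysis"
begin

text \<open>C(b,D) = { sum_{j>=1} d_j b^(-j) : d_j in D }.  Index shifted: d j stands for d_(j+1).\<close>
definition radix_set :: "complex \<Rightarrow> complex set \<Rightarrow> complex set" where
  "radix_set b D = {(\<Sum>j. d j / b ^ (Suc j)) | d. \<forall>j. d j \<in> D}"

definition diff_set :: "complex set \<Rightarrow> complex set" where
  "diff_set D = {x - y | x y. x \<in> D \<and> y \<in> D}"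

definition radix_diff_set :: "complex \<Rightarrow> complex set \<Rightarrow> complex set" where
  "radix_diff_set b D = radix_set b (diff_set D)"

definition diam_pow :: "real \<Rightarrow> 'a::metric_space set \<Rightarrow> real" where
  "diam_pow s U = (if U = {} then 0 else if s = 0 then 1 else diameter U powr s)"

definition hausdorff_content :: "real \<Rightarrow> real \<Rightarrow> 'a::metric_space set \<Rightarrow> ennreal" where
  "hausdorff_content s \<delta> S =
     (INF U \<in> {U :: nat \<Rightarrow> 'a set. S \<subseteq> (\<Union>i. U i) \<and> (\<forall>i. bounded (U i) \<and> diameter (U i) \<le> \<delta>)}.
        \<Sum>i. ennreal (diam_pow s (U i)))"

definition hausdorff_measure :: "real \<Rightarrow> 'a::metric_space set \<Rightarrow> ennreal" where
  "hausdorff_measure s S = (SUP \<delta> \<in> {0<..}. hausdorff_content s \<delta> S)"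

definition hausdorff_dim :: "'a::metric_space set \<Rightarrow> real" where
  "hausdorff_dim S = Inf {s. 0 \<le> s \<and> hausdorff_measure s S = 0}"

text \<open>Packing premeasure: supremum over (finite, hence all countable) packings by disjoint
  closed balls centred in S with radii at most delta, of sum (2 r)^s.\<close>
definition packing_pre :: "real \<Rightarrow> real \<Rightarrow> 'a::metric_space set \<Rightarrow> ennreal" where
  "packing_pre s \<delta> S =
     (SUP P \<in> {P :: ('a \<times> real) set. finite P \<and> P \<subseteq> S \<times> {0<..\<delta>} \<and>
                  disjoint_family_on (\<lambda>(c, r). cball c r) P}.
        \<Sum>(c, r) \<in> P. ennreal ((2 * r) powr s))"

definition packing_zero :: "real \<Rightarrow> 'a::metric_space set \<Rightarrow> ennreal" where
  "packing_zero s S = (INF \<delta> \<in> {0<..}. packing_pre s \<delta> S)"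

definition packing_measure :: "real \<Rightarrow> 'a::metric_space set \<Rightarrow> ennreal" where
  "packing_measure s S =
     (INF A \<in> {A :: nat \<Rightarrow> 'a set. S \<subseteq> (\<Union>i. A i)}. \<Sum>i. packing_zero s (A i))"

definition packing_dim :: "'a::metric_space set \<Rightarrow> real" where
  "packing_dim S = Inf {s. 0 \<le> s \<and> packing_measure s S = 0}"

definition covering_number :: "real \<Rightarrow> 'a::metric_space set \<Rightarrow> nat" where
  "covering_number \<delta> S =
     (LEAST k. \<exists>F. finite F \<and> card F = k \<and> S \<subseteq> \<Union>F \<and> (\<forall>U\<in>F. bounded U \<and> diameter U \<le> \<delta>))"

definition has_box_dim :: "'a::metric_space set \<Rightarrow> real \<Rightarrow> bool" where
  "has_box_dim S d \<longleftrightarrow>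
     ((\<lambda>\<delta>. ln (real (covering_number \<delta> S)) / - ln \<delta>) \<longlongrightarrow> d) (at_right 0)"

end

(*
  A point z lies in C \<inter> (C + \<alpha>) iff z and z - \<alpha> both have expansions with digits in {0, m};
  by uniqueness of the expansion of \<alpha>, the digit differences are exactly the \<alpha>_j. Hence the
  j-th digit of z is forced where \<alpha>_j \<noteq> 0 and free where \<alpha>_j = 0, and C(\<alpha>) is the image of
  Cantor space under a coding map whose number of free positions among the first L grows like f L
  with f = (\<Sum>(a_l + u_l)) / (m p), up to a bounded error.

  Codes agreeing on the free positions below L give points within m |b|^-L. Conversely, multiplying
  by b^L turns level-L prefixes into Gaussian integers, which are distinct for distinct prefixes
  because b = -n + i divides no nonzero rational integer of modulus at most m \<le> n^2; so a set of
  diameter |b|^-L meets boundedly many level-L cylinders. The image of the fair coin-tossing measure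
  therefore gives every set of small diameter \<delta> mass at most a constant times \<delta>^d, with
  d = f log 2 / log |b|, and the mass distribution principle bounds the Hausdorff and packing
  dimensions from below. Covering by the 2^(f L) cylinders of level L gives the matching upper
  bounds, and both estimates together pin down the box-counting dimension.
*)
theory Submission
  imports Defs "HOL-Probability.Infinite_Product_Measure" "HOL-Probability.Probability_Mass_Function"
begin

section \<open>Fractal dimensions in metric spaces\<close>

lemma diameter_le_dist:
  fixes S :: "'a::metric_space set"
  assumes "S \<noteq> {} \<or> 0 \<le> \<delta>" and "\<And>x y. x \<in> S \<Longrightarrow> y \<in> S \<Longrightarrow> dist x y \<le> \<delta>"
  shows "diameter S \<le> \<delta>"
  using assms by (auto simp: diameter_def intro: cSUP_least)

lemma diameter_cball_le:
  fixes x :: "'a::metric_space"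
  assumes "0 \<le> r"
  shows "diameter (cball x r) \<le> 2 * r"
proof (rule diameter_le_dist)
  fix y z assume "y \<in> cball x r" "z \<in> cball x r"
  then show "dist y z \<le> 2 * r"
    using dist_triangle[of y z x] by (auto simp: dist_commute)
qed (use assms in simp)

lemma bounded_if_dist_le:
  fixes S :: "'a::metric_space set"
  assumes "\<And>x y. x \<in> S \<Longrightarrow> y \<in> S \<Longrightarrow> dist x y \<le> d"
  shows "bounded S"
proof (cases "S = {}")
  case False
  then obtain x where "x \<in> S" by blast
  then show ?thesis
    unfolding bounded_def using assms by blast
qed simp

lemma powr_power_commute: "0 < x \<Longrightarrow> (x ^ n) powr a = (x powr a) ^ n"
  for x a :: real
  by (simp add: powr_realpow[symmetric] powr_powr mult.commute)

lemma powr_less_one_of_less_one: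
  fixes x a :: real
  assumes "0 \<le> x" "x < 1" "0 < a"
  shows "x powr a < 1"
  using powr_less_mono2[OF assms(3,1,2)] by simp

lemma diam_pow_nonneg: "0 \<le> diam_pow s U"
  by (simp add: diam_pow_def)

lemma diam_pow_le:
  assumes "bounded U" "diameter U \<le> r" "0 < r" "0 \<le> s"
  shows "diam_pow s U \<le> r powr s"
  using assms diameter_ge_0[OF assms(1)] by (auto simp: diam_pow_def intro!: powr_mono2)

lemma diam_pow_closure:
  assumes "bounded U"
  shows "diam_pow s (closure U) = diam_pow s U"
  using diameter_closure[OF assms] by (simp add: diam_pow_def)

lemma ennreal_divide_mult_le:
  assumes "y \<le> ennreal c * x" "0 < c"
  shows "ennreal (1 / c) * y \<le> x"
proof -
  have "ennreal (1 / c) * y \<le> ennreal (1 / c) * (ennreal c * x)"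
    using mult_left_mono[OF assms(1)] by simp
  also have "\<dots> = x"
    using assms(2) by (simp add: mult.assoc[symmetric] ennreal_mult[symmetric])
  finally show ?thesis .
qed

lemma ex_power_bracket:
  fixes \<rho> r :: real
  assumes "0 < \<rho>" "\<rho> < 1" "0 < r" "r \<le> 1"
  shows "\<exists>k. \<rho> ^ Suc k < r \<and> r \<le> \<rho> ^ k"
proof -
  define k where "k = (LEAST k. \<rho> ^ Suc k < r)"
  obtain n where "\<rho> ^ n < r"
    using real_arch_pow_inv[OF assms(3,2)] by blast
  moreover have "\<rho> ^ Suc n \<le> \<rho> ^ n"
    using assms by (intro power_decreasing) auto
  ultimately have "\<exists>k. \<rho> ^ Suc k < r"
    by (blast intro: le_less_trans)
  then have below: "\<rho> ^ Suc k < r"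
    unfolding k_def by (rule LeastI_ex)
  have "r \<le> \<rho> ^ k"
  proof (cases k)
    case (Suc k')
    then have "\<not> \<rho> ^ Suc k' < r"
      using not_less_Least[of k' "\<lambda>k. \<rho> ^ Suc k < r"] unfolding k_def by simp
    then show ?thesis using Suc by simp
  qed (use assms in simp)
  with below show ?thesis by blast
qed

lemma sum_power_le_geometric:
  fixes q :: real
  assumes "0 \<le> q" "q < 1" "finite T" "T \<subseteq> {L..}"
  shows "(\<Sum>k\<in>T. q ^ k) \<le> q ^ L / (1 - q)"
proof -
  have "summable (\<lambda>k. q ^ (k + L))"
    using assms by (simp add: power_add summable_mult2 summable_geometric)
  have "(\<Sum>k\<in>T. q ^ k) = (\<Sum>k\<in>(\<lambda>k. k - L) ` T. q ^ (k + L))"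
  proof (subst sum.reindex)
    show "inj_on (\<lambda>k. k - L) T" using assms(4) by (intro inj_on_diff_nat) auto
  qed (use assms(4) in \<open>auto intro!: sum.cong\<close>)
  also have "\<dots> \<le> (\<Sum>k. q ^ (k + L))"
    using \<open>summable _\<close> assms by (intro sum_le_suminf) auto
  also have "\<dots> = (\<Sum>k. q ^ k) * q ^ L"
    using assms by (simp add: power_add suminf_mult2 summable_geometric)
  also have "\<dots> = q ^ L / (1 - q)"
    using assms by (simp add: suminf_geometric)
  finally show ?thesis .
qed

lemma Inf_vanishing_exponents_eq:
  fixes \<mu> :: "real \<Rightarrow> ennreal"
  assumes "0 \<le> d" and "\<And>\<sigma>. 0 \<le> \<sigma> \<Longrightarrow> \<sigma> \<le> d \<Longrightarrow> 0 < \<mu> \<sigma>" and "\<And>\<sigma>. d < \<sigma> \<Longrightarrow> \<mu> \<sigma> = 0"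
  shows "Inf {\<sigma>. 0 \<le> \<sigma> \<and> \<mu> \<sigma> = 0} = d"
proof -
  have "{\<sigma>. 0 \<le> \<sigma> \<and> \<mu> \<sigma> = 0} = {d<..}"
  proof (intro set_eqI iffI)
    fix \<sigma> assume "\<sigma> \<in> {\<sigma>. 0 \<le> \<sigma> \<and> \<mu> \<sigma> = 0}"
    then show "\<sigma> \<in> {d<..}" using assms(2)[of \<sigma>] by (cases "\<sigma> \<le> d") auto
  qed (use assms in auto)
  then show ?thesis by (simp only: cInf_greaterThan)
qed

definition fine_cover :: "real \<Rightarrow> 'a::metric_space set \<Rightarrow> 'a set set \<Rightarrow> bool" where
  "fine_cover \<delta> S F \<longleftrightarrow> finite F \<and> S \<subseteq> \<Union>F \<and> (\<forall>U\<in>F. bounded U \<and> diameter U \<le> \<delta>)"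

lemma covering_number_eq_Least_fine_cover:
  "covering_number \<delta> S = (LEAST k. \<exists>F. fine_cover \<delta> S F \<and> card F = k)"
  unfolding covering_number_def fine_cover_def by (rule arg_cong[where f = Least]) auto

lemma covering_number_le_card:
  assumes "fine_cover \<delta> S F"
  shows "covering_number \<delta> S \<le> card F"
  unfolding covering_number_eq_Least_fine_cover by (rule Least_le) (use assms in blast)

lemma obtain_minimal_fine_cover:
  assumes "fine_cover \<delta> S F"
  obtains F' where "fine_cover \<delta> S F'" "card F' = covering_number \<delta> S"
proof -
  have "\<exists>k F. fine_cover \<delta> S F \<and> card F = k"
    using assms by blast
  then have "\<exists>F. fine_cover \<delta> S F \<and> card F = covering_number \<delta> S"
    unfolding covering_number_eq_Least_fine_cover by (rule LeastI_ex)
  then show ?thesis using that by blast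
qed

lemma hausdorff_content_le_fine_cover:
  assumes F: "fine_cover r S F" and "0 < r" "r \<le> \<delta>" "0 \<le> \<sigma>"
  shows "hausdorff_content \<sigma> \<delta> S \<le> ennreal (real (card F) * r powr \<sigma>)"
proof -
  have fin: "finite F" and cov: "S \<subseteq> \<Union>F" and small: "\<And>V. V \<in> F \<Longrightarrow> bounded V \<and> diameter V \<le> r"
    using F by (auto simp: fine_cover_def)
  obtain g where g: "bij_betw g {0..<card F} F"
    using ex_bij_betw_nat_finite[OF fin] by blast
  have gF: "g i \<in> F" if "i < card F" for i
    using bij_betw_apply[OF g] that by simp
  define U where "U i = (if i < card F then g i else {})" for i
  have "S \<subseteq> (\<Union>i. U i)"
  proof
    fix x assume "x \<in> S"
    then obtain V where "V \<in> F" "x \<in> V" using cov by blast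
    moreover have "F = g ` {0..<card F}" using g by (simp add: bij_betw_def)
    ultimately have "V \<in> g ` {0..<card F}" by simp
    then obtain i where "i < card F" "g i = V" by auto
    then show "x \<in> (\<Union>i. U i)" using \<open>x \<in> V\<close> by (auto simp: U_def)
  qed
  moreover have "bounded (U i) \<and> diameter (U i) \<le> \<delta>" for i
    using small[OF gF, of i] assms(2,3) by (auto simp: U_def)
  ultimately have "hausdorff_content \<sigma> \<delta> S \<le> (\<Sum>i. ennreal (diam_pow \<sigma> (U i)))"
    unfolding hausdorff_content_def by (intro INF_lower) auto
  also have "\<dots> = (\<Sum>i<card F. ennreal (diam_pow \<sigma> (U i)))"
    by (rule suminf_finite) (auto simp: U_def diam_pow_def)
  also have "\<dots> \<le> (\<Sum>i<card F. ennreal (r powr \<sigma>))"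
    using small[OF gF] assms(2,4) by (intro sum_mono ennreal_leI) (auto simp: U_def intro!: diam_pow_le)
  also have "\<dots> = ennreal (real (card F) * r powr \<sigma>)"
    by (simp add: ennreal_mult ennreal_of_nat_eq_real_of_nat)
  finally show ?thesis .
qed

lemma hausdorff_measure_eq_0_if_fine_covers:
  assumes "0 \<le> \<sigma>" and r: "\<And>L. 0 < r L" "r \<longlonglongrightarrow> 0" and F: "\<And>L. fine_cover (r L) S (F L)"
    and lim: "(\<lambda>L. real (card (F L)) * r L powr \<sigma>) \<longlonglongrightarrow> 0"
  shows "hausdorff_measure \<sigma> S = 0"
proof -
  have "hausdorff_content \<sigma> \<delta> S = 0" if "0 < \<delta>" for \<delta>
  proof -
    obtain L0 where "\<And>L. L \<ge> L0 \<Longrightarrow> r L < \<delta>"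
      using order_tendstoD(2)[OF r(2) \<open>0 < \<delta>\<close>] by (auto simp: eventually_sequentially)
    then have "\<forall>L\<ge>L0. hausdorff_content \<sigma> \<delta> S \<le> ennreal (real (card (F L)) * r L powr \<sigma>)"
      using hausdorff_content_le_fine_cover[OF F r(1)] assms(1) by (simp add: less_imp_le)
    moreover have "(\<lambda>L. ennreal (real (card (F L)) * r L powr \<sigma>)) \<longlonglongrightarrow> ennreal 0"
      using lim by (rule tendsto_ennrealI)
    ultimately have "hausdorff_content \<sigma> \<delta> S \<le> ennreal 0"
      using LIMSEQ_le_const by blast
    then show ?thesis by simp
  qed
  then show ?thesis
    unfolding hausdorff_measure_def by simp
qed

lemma one_le_suminf_emeasure_preimages:
  fixes Z :: "'b \<Rightarrow> 'a::metric_space"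
  assumes M: "prob_space M" and Z: "Z \<in> borel_measurable M"
    and closed: "\<And>i. closed (A i)" and cov: "Z ` space M \<subseteq> (\<Union>i. A i)"
  shows "1 \<le> (\<Sum>i. emeasure M (Z -` A i \<inter> space M))"
proof -
  have meas: "Z -` A i \<inter> space M \<in> sets M" for i
    using measurable_sets[OF Z, of "A i"] closed by simp
  have "x \<in> (\<Union>i. Z -` A i \<inter> space M)" if "x \<in> space M" for x
  proof -
    have "Z x \<in> (\<Union>i. A i)"
      using cov that by blast
    then show ?thesis
      using that by blast
  qed
  then have "space M = (\<Union>i. Z -` A i \<inter> space M)"
    by blast
  then have "1 = emeasure M (\<Union>i. Z -` A i \<inter> space M)"
    using prob_space.emeasure_space_1[OF M] by simp
  also have "\<dots> \<le> (\<Sum>i. emeasure M (Z -` A i \<inter> space M))"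
    using meas by (intro emeasure_subadditive_countably) auto
  finally show ?thesis .
qed

lemma hausdorff_measure_pos_if_mass_distribution:
  fixes Z :: "'b \<Rightarrow> 'a::metric_space"
  assumes M: "prob_space M" and Z: "Z \<in> borel_measurable M" and ZS: "Z ` space M \<subseteq> S"
    and "0 < C" "0 < \<delta>"
    and mass: "\<And>U. closed U \<Longrightarrow> bounded U \<Longrightarrow> diameter U \<le> \<delta> \<Longrightarrow>
                 emeasure M (Z -` U \<inter> space M) \<le> ennreal (C * diam_pow \<sigma> U)"
  shows "0 < hausdorff_measure \<sigma> S"
proof -
  have "ennreal (1 / C) \<le> hausdorff_content \<sigma> \<delta> S"
    unfolding hausdorff_content_def
  proof (rule INF_greatest, safe)
    fix U :: "nat \<Rightarrow> 'a set"
    assume cov: "S \<subseteq> (\<Union>i. U i)" and bd: "\<forall>i. bounded (U i) \<and> diameter (U i) \<le> \<delta>"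
    have "Z ` space M \<subseteq> (\<Union>i. closure (U i))"
    proof
      fix y assume "y \<in> Z ` space M"
      then obtain i where "y \<in> U i"
        using ZS cov by blast
      then show "y \<in> (\<Union>i. closure (U i))"
        using closure_subset[of "U i"] by blast
    qed
    then have "1 \<le> (\<Sum>i. emeasure M (Z -` closure (U i) \<inter> space M))"
      by (intro one_le_suminf_emeasure_preimages[OF M Z]) auto
    also have "\<dots> \<le> (\<Sum>i. ennreal (C * diam_pow \<sigma> (U i)))"
    proof (intro suminf_le)
      fix i
      have "bounded (U i)" "diameter (U i) \<le> \<delta>" using bd by auto
      then show "emeasure M (Z -` closure (U i) \<inter> space M) \<le> ennreal (C * diam_pow \<sigma> (U i))"
        using mass[of "closure (U i)"] by (simp add: bounded_closure diameter_closure diam_pow_closure del: ennreal_mult)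
    qed auto
    also have "\<dots> = ennreal C * (\<Sum>i. ennreal (diam_pow \<sigma> (U i)))"
      using \<open>0 < C\<close> by (simp add: ennreal_mult diam_pow_nonneg)
    finally show "ennreal (1 / C) \<le> (\<Sum>i. ennreal (diam_pow \<sigma> (U i)))"
      using ennreal_divide_mult_le[OF _ \<open>0 < C\<close>] by fastforce
  qed
  also have "\<dots> \<le> hausdorff_measure \<sigma> S"
    unfolding hausdorff_measure_def using \<open>0 < \<delta>\<close> by (intro SUP_upper) simp
  finally show ?thesis
    using \<open>0 < C\<close> by (auto simp: less_le_trans[rotated])
qed

lemma obtain_maximal_separated_subset:
  fixes A :: "'a::metric_space set"
  assumes "0 \<le> \<epsilon>"
    and bound: "\<And>X. X \<subseteq> A \<Longrightarrow> pairwise (\<lambda>x y. \<epsilon> < dist x y) X \<Longrightarrow> finite X \<and> card X \<le> N"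
  obtains X where "X \<subseteq> A" "finite X" "pairwise (\<lambda>x y. \<epsilon> < dist x y) X" "A \<subseteq> (\<Union>x\<in>X. cball x \<epsilon>)"
proof -
  define Sep where "Sep = {X. X \<subseteq> A \<and> pairwise (\<lambda>x y. \<epsilon> < dist x y) X}"
  have "card ` Sep \<subseteq> {..N}"
    using bound by (auto simp: Sep_def)
  then have fin: "finite (card ` Sep)"
    by (rule finite_subset) simp
  have "{} \<in> Sep"
    by (simp add: Sep_def)
  then have "Max (card ` Sep) \<in> card ` Sep"
    using fin by (intro Max_in) auto
  then obtain X where X: "X \<in> Sep" "card X = Max (card ` Sep)"
    by auto
  have XA: "X \<subseteq> A" and sepX: "pairwise (\<lambda>x y. \<epsilon> < dist x y) X" and finX: "finite X"
    using X(1) bound by (auto simp: Sep_def)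
  have "a \<in> (\<Union>x\<in>X. cball x \<epsilon>)" if "a \<in> A" for a
  proof (rule ccontr)
    assume "a \<notin> (\<Union>x\<in>X. cball x \<epsilon>)"
    then have far: "\<And>x. x \<in> X \<Longrightarrow> \<epsilon> < dist x a" and "a \<notin> X"
      using \<open>0 \<le> \<epsilon>\<close> by (auto simp: not_le)
    have "insert a X \<in> Sep"
      using XA sepX that far by (auto simp: Sep_def pairwise_insert dist_commute)
    then have "card (insert a X) \<le> card X"
      using X(2) fin by simp
    then show False
      using \<open>a \<notin> X\<close> finX by simp
  qed
  then show ?thesis
    using that XA finX sepX by blast
qed

definition separation_bounded :: "'a::metric_space set \<Rightarrow> bool" where
  "separation_bounded S \<longleftrightarrow>
     (\<forall>\<epsilon>>0. \<exists>N. \<forall>X. X \<subseteq> S \<longrightarrow> pairwise (\<lambda>x y. \<epsilon> < dist x y) X \<longrightarrow> finite X \<and> card X \<le> N)"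

lemma separation_bounded_subset:
  assumes "separation_bounded S" "A \<subseteq> S"
  shows "separation_bounded A"
  unfolding separation_bounded_def
proof (intro allI impI)
  fix \<epsilon> :: real assume "0 < \<epsilon>"
  then obtain N where N: "\<forall>X. X \<subseteq> S \<longrightarrow> pairwise (\<lambda>x y. \<epsilon> < dist x y) X \<longrightarrow> finite X \<and> card X \<le> N"
    using assms(1) unfolding separation_bounded_def by blast
  show "\<exists>N. \<forall>X. X \<subseteq> A \<longrightarrow> pairwise (\<lambda>x y. \<epsilon> < dist x y) X \<longrightarrow> finite X \<and> card X \<le> N"
  proof (intro exI[of _ N] allI impI)
    fix X assume "X \<subseteq> A" "pairwise (\<lambda>x y. \<epsilon> < dist x y) X"
    then show "finite X \<and> card X \<le> N"
      using N assms(2) by blast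
  qed
qed

lemma disjoint_family_on_cballs_of_separated:
  assumes "pairwise (\<lambda>x y. 2 * r < dist x y) X"
  shows "disjoint_family_on (\<lambda>(c, r). cball c r) ((\<lambda>x. (x, r)) ` X)"
proof (clarsimp simp: disjoint_family_on_def)
  fix x y assume "x \<in> X" "y \<in> X" "x \<noteq> y"
  then have far: "2 * r < dist x y"
    using assms by (simp add: pairwise_def)
  show "cball x r \<inter> cball y r = {}"
  proof (rule ccontr)
    assume "cball x r \<inter> cball y r \<noteq> {}"
    then obtain z where "dist x z \<le> r" "dist y z \<le> r"
      by auto
    then show False
      using far dist_triangle2[of x y z] by linarith
  qed
qed

lemma packing_pre_mono:
  assumes "A \<subseteq> A'" "\<delta> \<le> \<delta>'"
  shows "packing_pre s \<delta> A \<le> packing_pre s \<delta>' A'"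
  unfolding packing_pre_def by (rule SUP_subset_mono) (use assms in fastforce)+

lemma packing_zero_mono: "A \<subseteq> A' \<Longrightarrow> packing_zero s A \<le> packing_zero s A'"
  unfolding packing_zero_def by (intro INF_mono) (use packing_pre_mono in blast)

lemma packing_zero_empty: "packing_zero s ({} :: 'a::metric_space set) = 0"
proof -
  have "packing_pre s \<delta> ({} :: 'a set) = 0" for \<delta>
    unfolding packing_pre_def by (rule antisym[OF SUP_least]) auto
  moreover have "packing_zero s ({} :: 'a set) \<le> packing_pre s 1 ({} :: 'a set)"
    unfolding packing_zero_def by (rule INF_lower2[where i = 1]) simp_all
  ultimately show ?thesis by simp
qed

lemma emeasure_preimage_cball_le:
  fixes Z :: "'b \<Rightarrow> 'a::metric_space"
  assumes "0 \<le> \<sigma>" "0 < C" "0 < r" "2 * r \<le> \<delta>\<^sub>0"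
    and mass: "\<And>U. closed U \<Longrightarrow> bounded U \<Longrightarrow> diameter U \<le> \<delta>\<^sub>0 \<Longrightarrow>
                 emeasure M (Z -` U \<inter> space M) \<le> ennreal (C * diam_pow \<sigma> U)"
  shows "emeasure M (Z -` cball x r \<inter> space M) \<le> ennreal (C * 2 powr \<sigma> * r powr \<sigma>)"
proof -
  have diam: "diameter (cball x r) \<le> 2 * r"
    by (rule diameter_cball_le) (use \<open>0 < r\<close> in simp)
  have "diam_pow \<sigma> (cball x r) \<le> (2 * r) powr \<sigma>"
    using diam \<open>0 < r\<close> \<open>0 \<le> \<sigma>\<close> by (intro diam_pow_le) auto
  also have "\<dots> = 2 powr \<sigma> * r powr \<sigma>"
    using \<open>0 < r\<close> by (simp add: powr_mult)
  finally have "C * diam_pow \<sigma> (cball x r) \<le> C * 2 powr \<sigma> * r powr \<sigma>"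
    using \<open>0 < C\<close> by (simp add: mult.assoc)
  have "emeasure M (Z -` cball x r \<inter> space M) \<le> ennreal (C * diam_pow \<sigma> (cball x r))"
    using mass diam \<open>2 * r \<le> \<delta>\<^sub>0\<close> by simp
  also have "\<dots> \<le> ennreal (C * 2 powr \<sigma> * r powr \<sigma>)"
    by (rule ennreal_leI) fact
  finally show ?thesis .
qed

text \<open>A maximal \<open>2 \<delta>\<close>-separated subset of \<open>A\<close> yields disjoint \<open>\<delta>\<close>-balls centred in \<open>A\<close>
  and, by maximality, a cover of \<open>A\<close> by the concentric \<open>2 \<delta>\<close>-balls.\<close>

lemma emeasure_closure_le_packing_pre:
  fixes Z :: "'b \<Rightarrow> 'a::metric_space"
  assumes Z: "Z \<in> borel_measurable M" and "0 \<le> \<sigma>" "0 < C" "0 < \<delta>" "4 * \<delta> \<le> \<delta>\<^sub>0"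
    and mass: "\<And>U. closed U \<Longrightarrow> bounded U \<Longrightarrow> diameter U \<le> \<delta>\<^sub>0 \<Longrightarrow>
                 emeasure M (Z -` U \<inter> space M) \<le> ennreal (C * diam_pow \<sigma> U)"
    and sep: "\<And>X. X \<subseteq> A \<Longrightarrow> pairwise (\<lambda>x y. 2 * \<delta> < dist x y) X \<Longrightarrow> finite X \<and> card X \<le> N"
  shows "emeasure M (Z -` closure A \<inter> space M) \<le> ennreal (C * 2 powr \<sigma>) * packing_pre \<sigma> \<delta> A"
proof -
  have "0 \<le> 2 * \<delta>"
    using \<open>0 < \<delta>\<close> by simp
  then obtain X where XA: "X \<subseteq> A" and finX: "finite X" and sepX: "pairwise (\<lambda>x y. 2 * \<delta> < dist x y) X"
    and cov: "A \<subseteq> (\<Union>x\<in>X. cball x (2 * \<delta>))"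
    using sep by (rule obtain_maximal_separated_subset)
  have "closure A \<subseteq> (\<Union>x\<in>X. cball x (2 * \<delta>))"
    using finX by (intro closure_minimal[OF cov] closed_UN) auto
  then have sub: "Z -` closure A \<inter> space M \<subseteq> (\<Union>x\<in>X. Z -` cball x (2 * \<delta>) \<inter> space M)"
    by blast
  have meas: "Z -` cball x (2 * \<delta>) \<inter> space M \<in> sets M" for x
    using measurable_sets[OF Z, of "cball x (2 * \<delta>)"] by simp
  have "emeasure M (Z -` closure A \<inter> space M) \<le> emeasure M (\<Union>x\<in>X. Z -` cball x (2 * \<delta>) \<inter> space M)"
    using sub finX meas by (intro emeasure_mono sets.finite_UN) auto
  also have "\<dots> \<le> (\<Sum>x\<in>X. emeasure M (Z -` cball x (2 * \<delta>) \<inter> space M))"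
    using finX meas by (intro emeasure_subadditive_finite) auto
  also have "\<dots> \<le> (\<Sum>x\<in>X. ennreal (C * 2 powr \<sigma> * (2 * \<delta>) powr \<sigma>))"
  proof (rule sum_mono)
    fix x
    show "emeasure M (Z -` cball x (2 * \<delta>) \<inter> space M) \<le> ennreal (C * 2 powr \<sigma> * (2 * \<delta>) powr \<sigma>)"
      by (rule emeasure_preimage_cball_le[OF \<open>0 \<le> \<sigma>\<close> \<open>0 < C\<close> _ _ mass]) (use assms(4,5) in auto)
  qed
  also have "\<dots> = ennreal (C * 2 powr \<sigma>) * (\<Sum>(c, r)\<in>(\<lambda>x. (x, \<delta>)) ` X. ennreal ((2 * r) powr \<sigma>))"
  proof -
    have "(\<Sum>(c, r)\<in>(\<lambda>x. (x, \<delta>)) ` X. ennreal ((2 * r) powr \<sigma>)) = (\<Sum>x\<in>X. ennreal ((2 * \<delta>) powr \<sigma>))"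
      by (subst sum.reindex) (auto simp: inj_on_def)
    then show ?thesis
      using \<open>0 < C\<close> by (simp add: ennreal_mult' ac_simps)
  qed
  also have "\<dots> \<le> ennreal (C * 2 powr \<sigma>) * packing_pre \<sigma> \<delta> A"
    unfolding packing_pre_def
    using finX XA \<open>0 < \<delta>\<close> disjoint_family_on_cballs_of_separated[OF sepX]
    by (intro mult_left_mono SUP_upper) auto
  finally show ?thesis .
qed

lemma packing_zero_ge_emeasure_closure:
  fixes Z :: "'b \<Rightarrow> 'a::metric_space"
  assumes Z: "Z \<in> borel_measurable M" and "0 \<le> \<sigma>" "0 < C" "0 < \<delta>\<^sub>0"
    and mass: "\<And>U. closed U \<Longrightarrow> bounded U \<Longrightarrow> diameter U \<le> \<delta>\<^sub>0 \<Longrightarrow>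
                 emeasure M (Z -` U \<inter> space M) \<le> ennreal (C * diam_pow \<sigma> U)"
    and sep: "separation_bounded A"
  shows "ennreal (1 / (C * 2 powr \<sigma>)) * emeasure M (Z -` closure A \<inter> space M) \<le> packing_zero \<sigma> A"
  unfolding packing_zero_def
proof (rule INF_greatest)
  fix \<delta> :: real assume "\<delta> \<in> {0<..}"
  define \<delta>' where "\<delta>' = min \<delta> (\<delta>\<^sub>0 / 4)"
  have \<delta>': "0 < \<delta>'" "4 * \<delta>' \<le> \<delta>\<^sub>0" "\<delta>' \<le> \<delta>"
    using \<open>\<delta> \<in> {0<..}\<close> \<open>0 < \<delta>\<^sub>0\<close> by (auto simp: \<delta>'_def)
  have "0 < 2 * \<delta>'"
    using \<delta>'(1) by simp
  then obtain N where N: "\<forall>X. X \<subseteq> A \<longrightarrow> pairwise (\<lambda>x y. 2 * \<delta>' < dist x y) X \<longrightarrow> finite X \<and> card X \<le> N"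
    using sep unfolding separation_bounded_def by blast
  have "emeasure M (Z -` closure A \<inter> space M) \<le> ennreal (C * 2 powr \<sigma>) * packing_pre \<sigma> \<delta>' A"
    using emeasure_closure_le_packing_pre[OF Z \<open>0 \<le> \<sigma>\<close> \<open>0 < C\<close> \<delta>'(1,2) mass N[rule_format]] .
  also have "\<dots> \<le> ennreal (C * 2 powr \<sigma>) * packing_pre \<sigma> \<delta> A"
    using \<delta>'(3) by (intro mult_left_mono packing_pre_mono) auto
  finally show "ennreal (1 / (C * 2 powr \<sigma>)) * emeasure M (Z -` closure A \<inter> space M) \<le> packing_pre \<sigma> \<delta> A"
    using \<open>0 < C\<close> by (intro ennreal_divide_mult_le) auto
qed

lemma packing_measure_pos_if_mass_distribution:
  fixes Z :: "'b \<Rightarrow> 'a::metric_space"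
  assumes M: "prob_space M" and Z: "Z \<in> borel_measurable M" and ZS: "Z ` space M \<subseteq> S"
    and "0 \<le> \<sigma>" "0 < C" "0 < \<delta>\<^sub>0"
    and mass: "\<And>U. closed U \<Longrightarrow> bounded U \<Longrightarrow> diameter U \<le> \<delta>\<^sub>0 \<Longrightarrow>
                 emeasure M (Z -` U \<inter> space M) \<le> ennreal (C * diam_pow \<sigma> U)"
    and sep: "separation_bounded S"
  shows "0 < packing_measure \<sigma> S"
proof -
  define c where "c = C * 2 powr \<sigma>"
  have "0 < c"
    using \<open>0 < C\<close> by (simp add: c_def)
  have "ennreal (1 / c) \<le> packing_measure \<sigma> S"
    unfolding packing_measure_def
  proof (rule INF_greatest, safe)
    fix A :: "nat \<Rightarrow> 'a set" assume cov: "S \<subseteq> (\<Union>i. A i)"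
    have "Z ` space M \<subseteq> (\<Union>i. closure (A i \<inter> S))"
    proof
      fix y assume "y \<in> Z ` space M"
      then have "y \<in> S"
        using ZS by blast
      then obtain i where "y \<in> A i \<inter> S"
        using cov by blast
      then show "y \<in> (\<Union>i. closure (A i \<inter> S))"
        using closure_subset[of "A i \<inter> S"] by blast
    qed
    then have one: "1 \<le> (\<Sum>i. emeasure M (Z -` closure (A i \<inter> S) \<inter> space M))"
      by (intro one_le_suminf_emeasure_preimages[OF M Z]) auto
    have "ennreal (1 / c) = ennreal (1 / c) * 1"
      by simp
    also have "\<dots> \<le> ennreal (1 / c) * (\<Sum>i. emeasure M (Z -` closure (A i \<inter> S) \<inter> space M))"
      by (rule mult_left_mono[OF one]) simp
    also have "\<dots> = (\<Sum>i. ennreal (1 / c) * emeasure M (Z -` closure (A i \<inter> S) \<inter> space M))"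
      by (rule ennreal_suminf_cmult[symmetric])
    also have "\<dots> \<le> (\<Sum>i. packing_zero \<sigma> (A i))"
    proof (intro suminf_le)
      fix i
      have sep_i: "separation_bounded (A i \<inter> S)"
        using sep by (rule separation_bounded_subset) auto
      have "ennreal (1 / c) * emeasure M (Z -` closure (A i \<inter> S) \<inter> space M) \<le> packing_zero \<sigma> (A i \<inter> S)"
        unfolding c_def using packing_zero_ge_emeasure_closure[OF Z \<open>0 \<le> \<sigma>\<close> \<open>0 < C\<close> \<open>0 < \<delta>\<^sub>0\<close> mass sep_i] .
      also have "\<dots> \<le> packing_zero \<sigma> (A i)"
        by (rule packing_zero_mono) auto
      finally show "ennreal (1 / c) * emeasure M (Z -` closure (A i \<inter> S) \<inter> space M) \<le> packing_zero \<sigma> (A i)" .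
    qed auto
    finally show "ennreal (1 / c) \<le> (\<Sum>i. packing_zero \<sigma> (A i))" .
  qed
  then show ?thesis
    using \<open>0 < c\<close> by (auto simp: less_le_trans[rotated])
qed

lemma packing_sum_le_at_level:
  fixes P :: "('a::metric_space \<times> real) set"
  assumes "finite P" and PS: "fst ` P \<subseteq> S" and disj: "disjoint_family_on (\<lambda>(c, r). cball c r) P"
    and level: "\<And>p. p \<in> P \<Longrightarrow> \<rho> ^ Suc k < snd p \<and> snd p \<le> \<rho> ^ k" and "0 \<le> \<rho>" "0 \<le> \<sigma>"
    and sep: "\<And>X. X \<subseteq> S \<Longrightarrow> pairwise (\<lambda>x y. \<rho> ^ Suc k < dist x y) X \<Longrightarrow>
                finite X \<and> real (card X) * (2 * \<rho> ^ k) powr \<sigma> \<le> A"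
  shows "(\<Sum>p\<in>P. (2 * snd p) powr \<sigma>) \<le> A"
proof -
  have pos: "0 < snd p" if "p \<in> P" for p
    using level[OF that] \<open>0 \<le> \<rho>\<close> zero_le_power[of \<rho> "Suc k"] by linarith
  have far: "snd p < dist (fst p) (fst p')" if "p \<in> P" "p' \<in> P" "p \<noteq> p'" for p p'
  proof -
    have "cball (fst p) (snd p) \<inter> cball (fst p') (snd p') = {}"
      using disj that unfolding disjoint_family_on_def by (auto simp: case_prod_beta)
    moreover have "fst p' \<in> cball (fst p') (snd p')"
      using pos[OF that(2)] by simp
    ultimately have "fst p' \<notin> cball (fst p) (snd p)"
      by blast
    then show ?thesis
      by (simp add: not_le)
  qed
  have "inj_on fst P"
  proof (rule inj_onI, rule ccontr)
    fix p p' assume "p \<in> P" "p' \<in> P" "fst p = fst p'" "p \<noteq> p'"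
    then show False
      using far[of p p'] pos[of p] by simp
  qed
  have "pairwise (\<lambda>x y. \<rho> ^ Suc k < dist x y) (fst ` P)"
    unfolding pairwise_def using far level by (force intro: less_trans)
  then have bound: "real (card (fst ` P)) * (2 * \<rho> ^ k) powr \<sigma> \<le> A"
    using sep PS by blast
  have "(\<Sum>p\<in>P. (2 * snd p) powr \<sigma>) \<le> (\<Sum>p\<in>P. (2 * \<rho> ^ k) powr \<sigma>)"
    using level pos \<open>0 \<le> \<sigma>\<close> by (intro sum_mono powr_mono2) (auto intro: less_imp_le)
  also have "\<dots> = real (card (fst ` P)) * (2 * \<rho> ^ k) powr \<sigma>"
    using \<open>inj_on fst P\<close> by (simp add: card_image)
  finally show ?thesis
    using bound by linarith
qed

text \<open>The balls of a packing are grouped by the level \<open>k\<close> with \<open>\<rho>^(k+1) < r \<le> \<rho>^k\<close> of their radii.\<close>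

lemma packing_pre_le_geometric:
  fixes S :: "'a::metric_space set"
  assumes \<rho>: "0 < \<rho>" "\<rho> < 1" and "0 \<le> \<sigma>" "0 \<le> q" "q < 1"
    and sep: "\<And>k X. X \<subseteq> S \<Longrightarrow> pairwise (\<lambda>x y. \<rho> ^ Suc k < dist x y) X \<Longrightarrow>
                finite X \<and> real (card X) * (2 * \<rho> ^ k) powr \<sigma> \<le> A * q ^ k"
  shows "packing_pre \<sigma> (\<rho> ^ L) S \<le> ennreal (A * q ^ L / (1 - q))"
  unfolding packing_pre_def
proof (rule SUP_least, safe)
  fix P :: "('a \<times> real) set"
  assume finP: "finite P" and PS: "P \<subseteq> S \<times> {0<..\<rho> ^ L}"
    and disj: "disjoint_family_on (\<lambda>(c, r). cball c r) P"
  define lev where "lev p = (SOME k. \<rho> ^ Suc k < snd p \<and> snd p \<le> \<rho> ^ k)" for p :: "'a \<times> real"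
  have lev: "\<rho> ^ Suc (lev p) < snd p \<and> snd p \<le> \<rho> ^ lev p" if "p \<in> P" for p
  proof -
    have "0 < snd p" "snd p \<le> 1"
      using PS that \<rho> power_le_one[of \<rho> L] by force+
    then show ?thesis
      unfolding lev_def by (rule someI_ex[OF ex_power_bracket[OF \<rho>]])
  qed
  have "L < Suc (lev p)" if "p \<in> P" for p
  proof -
    have "\<rho> ^ Suc (lev p) < \<rho> ^ L"
      using lev[OF that] PS that by force
    then show ?thesis
      by (subst (asm) power_strict_decreasing_iff[OF \<rho>])
  qed
  then have lev_ge: "lev ` P \<subseteq> {L..}"
    by (auto simp: less_Suc_eq_le)
  have A: "0 \<le> A"
    using sep[of "{}" 0] by simp
  have "(\<Sum>p\<in>P. (2 * snd p) powr \<sigma>) = (\<Sum>k\<in>lev ` P. \<Sum>p\<in>{p \<in> P. lev p = k}. (2 * snd p) powr \<sigma>)"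
    using finP by (intro sum.group[symmetric]) auto
  also have "\<dots> \<le> (\<Sum>k\<in>lev ` P. A * q ^ k)"
  proof (rule sum_mono)
    fix k
    show "(\<Sum>p\<in>{p \<in> P. lev p = k}. (2 * snd p) powr \<sigma>) \<le> A * q ^ k"
    proof (rule packing_sum_le_at_level[OF _ _ _ _ _ \<open>0 \<le> \<sigma>\<close> sep])
      show "disjoint_family_on (\<lambda>(c, r). cball c r) {p \<in> P. lev p = k}"
        using disj by (rule disjoint_family_on_mono[rotated]) auto
    qed (use finP PS lev \<rho> in auto)
  qed
  also have "\<dots> \<le> A * (q ^ L / (1 - q))"
    unfolding sum_distrib_left[symmetric]
    using A finP lev_ge \<open>0 \<le> q\<close> \<open>q < 1\<close> by (intro mult_left_mono sum_power_le_geometric) auto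
  finally have "(\<Sum>p\<in>P. (2 * snd p) powr \<sigma>) \<le> A * q ^ L / (1 - q)"
    by simp
  then show "(\<Sum>(c, r)\<in>P. ennreal ((2 * r) powr \<sigma>)) \<le> ennreal (A * q ^ L / (1 - q))"
    by (simp add: case_prod_beta sum_ennreal ennreal_leI)
qed

lemma packing_measure_eq_0_if_separated_geometric:
  fixes S :: "'a::metric_space set"
  assumes \<rho>: "0 < \<rho>" "\<rho> < 1" and "0 \<le> \<sigma>" "0 \<le> q" "q < 1"
    and sep: "\<And>k X. X \<subseteq> S \<Longrightarrow> pairwise (\<lambda>x y. \<rho> ^ Suc k < dist x y) X \<Longrightarrow>
                finite X \<and> real (card X) * (2 * \<rho> ^ k) powr \<sigma> \<le> A * q ^ k"
  shows "packing_measure \<sigma> S = 0"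
proof -
  have "packing_zero \<sigma> S \<le> ennreal (A * q ^ L / (1 - q))" for L
  proof -
    have "packing_zero \<sigma> S \<le> packing_pre \<sigma> (\<rho> ^ L) S"
      unfolding packing_zero_def using \<rho> by (intro INF_lower) simp
    also have "\<dots> \<le> ennreal (A * q ^ L / (1 - q))"
      using packing_pre_le_geometric[OF assms] .
    finally show ?thesis .
  qed
  moreover have "(\<lambda>L. ennreal (A * q ^ L / (1 - q))) \<longlonglongrightarrow> ennreal (A * 0 / (1 - q))"
    using assms by (intro tendsto_ennrealI tendsto_mult tendsto_divide tendsto_const LIMSEQ_power_zero) auto
  ultimately have "packing_zero \<sigma> S \<le> ennreal 0"
    using LIMSEQ_le_const by fastforce
  then have zero: "packing_zero \<sigma> S = 0"
    by simp
  define B where "B i = (if i = 0 then S else {})" for i :: nat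
  have "packing_measure \<sigma> S \<le> (\<Sum>i. packing_zero \<sigma> (B i))"
    unfolding packing_measure_def by (rule INF_lower) (auto simp: B_def)
  also have "\<dots> = 0"
  proof -
    have "packing_zero \<sigma> (B i) = 0" for i
      by (cases "i = 0") (simp_all add: B_def zero packing_zero_empty)
    then show ?thesis by simp
  qed
  finally show ?thesis
    by simp
qed

lemma has_box_dim_if_log_covering_number_close:
  assumes "\<And>\<delta>. 0 < \<delta> \<Longrightarrow> \<delta> < 1 \<Longrightarrow> \<bar>ln (real (covering_number \<delta> S)) - d * - ln \<delta>\<bar> \<le> E"
  shows "has_box_dim S d"
proof -
  let ?N = "\<lambda>\<delta>. real (covering_number \<delta> S)"
  have bound: "\<bar>ln (?N \<delta>) / - ln \<delta> - d\<bar> \<le> E / - ln \<delta>" if "0 < \<delta>" "\<delta> < 1" for \<delta>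
  proof -
    have pos: "0 < - ln \<delta>"
      using that by simp
    have eq: "ln (?N \<delta>) / - ln \<delta> - d = (ln (?N \<delta>) - d * - ln \<delta>) / - ln \<delta>"
      using pos by (simp add: field_simps)
    have "\<bar>ln (?N \<delta>) - d * - ln \<delta>\<bar> / - ln \<delta> \<le> E / - ln \<delta>"
      by (intro divide_right_mono) (use assms[OF that] pos in auto)
    then show ?thesis
      unfolding eq abs_divide abs_of_pos[OF pos] .
  qed
  have "filterlim (\<lambda>\<delta>::real. - ln \<delta>) at_top (at_right 0)"
    by (subst filterlim_uminus_at_top) (simp add: ln_at_0)
  then have lim: "((\<lambda>\<delta>. E / - ln \<delta>) \<longlongrightarrow> 0) (at_right 0)"
    by (intro tendsto_divide_0[OF tendsto_const] filterlim_at_top_imp_at_infinity)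
  have "eventually (\<lambda>\<delta>. norm (ln (?N \<delta>) / - ln \<delta> - d) \<le> E / - ln \<delta>) (at_right (0::real))"
    unfolding eventually_at_right_field using bound by (intro exI[of _ 1]) auto
  then have "((\<lambda>\<delta>. ln (?N \<delta>) / - ln \<delta> - d) \<longlongrightarrow> 0) (at_right 0)"
    using lim by (rule Lim_null_comparison)
  then show ?thesis
    unfolding has_box_dim_def by (rule LIM_zero_cancel)
qed

section \<open>Sets coded by coin-tossing sequences\<close>

definition coin_space :: "(nat \<Rightarrow> bool) measure" where
  "coin_space = PiM UNIV (\<lambda>_. measure_pmf (bernoulli_pmf (1 / 2)))"

lemma prob_space_coin_space: "prob_space coin_space"
  unfolding coin_space_def by (intro prob_space_PiM prob_space_measure_pmf)

lemma space_coin_space [simp]: "space coin_space = UNIV"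
  by (simp add: coin_space_def space_PiM)

lemma cylinder_eq_prod_emb:
  assumes "v \<in> I \<rightarrow>\<^sub>E UNIV"
  shows "{\<omega>. restrict \<omega> I = v} =
           prod_emb UNIV (\<lambda>_. measure_pmf (bernoulli_pmf (1 / 2))) I (\<Pi>\<^sub>E j\<in>I. {v j})"
  using assms by (auto simp: prod_emb_def PiE_def extensional_def restrict_def fun_eq_iff)

lemma sets_coin_space_cylinder:
  assumes "finite I"
  shows "{\<omega>. restrict \<omega> I = v} \<in> sets coin_space"
proof (cases "v \<in> I \<rightarrow>\<^sub>E UNIV")
  case True
  then show ?thesis
    unfolding cylinder_eq_prod_emb[OF True] coin_space_def using assms by (intro sets_PiM_I) auto
next
  case False
  then have "{\<omega>. restrict \<omega> I = v} = {}"
    by auto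
  then show ?thesis
    by simp
qed

lemma emeasure_coin_space_cylinder:
  assumes "finite I" "v \<in> I \<rightarrow>\<^sub>E UNIV"
  shows "emeasure coin_space {\<omega>. restrict \<omega> I = v} = ennreal ((1 / 2) ^ card I)"
proof -
  have "emeasure coin_space {\<omega>. restrict \<omega> I = v} =
          (\<Prod>j\<in>I. emeasure (measure_pmf (bernoulli_pmf (1 / 2))) {v j})"
    unfolding cylinder_eq_prod_emb[OF assms(2)] coin_space_def
    using assms(1) by (intro emeasure_PiM_emb) (auto intro: prob_space_measure_pmf)
  also have "\<dots> = (\<Prod>j\<in>I. ennreal (1 / 2))"
    by (intro prod.cong refl) (simp add: emeasure_pmf_single)
  also have "\<dots> = ennreal ((1 / 2) ^ card I)"
    by (subst prod_constant) (rule ennreal_power, simp)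
  finally show ?thesis .
qed

locale cantor_coding =
  fixes Z :: "(nat \<Rightarrow> bool) \<Rightarrow> 'a::metric_space"
    and J :: "nat \<Rightarrow> nat set"
    and \<rho> c :: real and K :: nat and f B :: real
  assumes finite_J: "finite (J L)"
    and \<rho>: "0 < \<rho>" "\<rho> < 1"
    and c_pos: "0 < c"
    and dist_Z_le: "restrict \<omega> (J L) = restrict \<omega>' (J L) \<Longrightarrow> dist (Z \<omega>) (Z \<omega>') \<le> c * \<rho> ^ L"
    and card_prefixes_le: "(\<And>x y. x \<in> U \<Longrightarrow> y \<in> U \<Longrightarrow> dist x y \<le> \<rho> ^ L) \<Longrightarrow>
                             card ((\<lambda>\<omega>. restrict \<omega> (J L)) ` (Z -` U)) \<le> K"
    and card_J: "\<bar>real (card (J L)) - f * real L\<bar> \<le> B"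
begin

definition dimension :: real where
  "dimension = f * ln 2 / ln (1 / \<rho>)"

lemma B_nonneg: "0 \<le> B"
  using card_J[of 0] by simp

lemma f_nonneg: "0 \<le> f"
proof (rule ccontr)
  assume "\<not> 0 \<le> f"
  obtain L :: nat where "B + 1 < real L * - f"
    using ex_less_of_nat_mult[of "- f" "B + 1"] \<open>\<not> 0 \<le> f\<close> by auto
  then have "B + 1 < - (f * real L)"
    by (simp add: mult.commute)
  then show False
    using card_J[of L] by linarith
qed

lemma dimension_nonneg: "0 \<le> dimension"
  using f_nonneg \<rho> by (simp add: dimension_def)

lemma finite_prefixes: "finite ((\<lambda>\<omega>. restrict \<omega> (J L)) ` (X :: (nat \<Rightarrow> bool) set))"
  by (rule finite_subset[of _ "J L \<rightarrow>\<^sub>E UNIV"]) (auto intro!: finite_PiE finite_J)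

lemma card_all_prefixes: "card (J L \<rightarrow>\<^sub>E (UNIV :: bool set)) = 2 ^ card (J L)"
  by (simp add: card_PiE finite_J)

lemma K_pos: "0 < K"
proof -
  define \<omega> :: "nat \<Rightarrow> bool" where "\<omega> = (\<lambda>_. False)"
  have "restrict \<omega> (J 0) \<in> (\<lambda>\<omega>. restrict \<omega> (J 0)) ` (Z -` {Z \<omega>})"
    by blast
  then have "0 < card ((\<lambda>\<omega>. restrict \<omega> (J 0)) ` (Z -` {Z \<omega>}))"
    using finite_prefixes by (auto simp: card_gt_0_iff)
  also have "\<dots> \<le> K"
    by (rule card_prefixes_le) simp
  finally show ?thesis .
qed

lemma pow_powr_dimension: "(\<rho> ^ L) powr dimension = 2 powr (- (f * real L))"
  using \<rho> by (simp add: powr_def dimension_def ln_realpow ln_div)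

lemma two_pow_card_J_le: "2 ^ card (J L) \<le> 2 powr B * (\<rho> ^ L) powr (- dimension)"
proof -
  have "(2::real) ^ card (J L) = 2 powr real (card (J L))"
    by (simp add: powr_realpow)
  also have "\<dots> \<le> 2 powr (B + f * real L)"
    using card_J[of L] by (intro powr_mono) auto
  also have "\<dots> = 2 powr B * (\<rho> ^ L) powr (- dimension)"
    by (simp add: powr_add powr_minus pow_powr_dimension)
  finally show ?thesis .
qed

lemma two_pow_card_J_ge: "2 powr (- B) * (\<rho> ^ L) powr (- dimension) \<le> 2 ^ card (J L)"
proof -
  have "2 powr (- B) * (\<rho> ^ L) powr (- dimension) = 2 powr (- B + f * real L)"
    by (simp add: powr_add powr_minus pow_powr_dimension powr_diff divide_inverse mult.commute)
  also have "\<dots> \<le> 2 powr real (card (J L))"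
    using card_J[of L] by (intro powr_mono) auto
  also have "\<dots> = 2 ^ card (J L)"
    by (simp add: powr_realpow)
  finally show ?thesis .
qed

lemma half_pow_card_J_le:
  assumes "\<sigma> \<le> dimension"
  shows "(1 / 2) ^ card (J L) \<le> 2 powr B * (\<rho> ^ L) powr \<sigma>"
proof -
  have "(1 / 2 :: real) ^ card (J L) = 2 powr (- real (card (J L)))"
    by (simp add: powr_minus powr_realpow power_one_over inverse_eq_divide)
  also have "\<dots> \<le> 2 powr (B - f * real L)"
    using card_J[of L] by (intro powr_mono) auto
  also have "\<dots> = 2 powr B * (\<rho> ^ L) powr dimension"
    by (simp add: powr_diff powr_minus pow_powr_dimension divide_inverse)
  also have "\<dots> \<le> 2 powr B * (\<rho> ^ L) powr \<sigma>"
    using assms \<rho> by (intro mult_left_mono powr_mono') (auto simp: power_le_one)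
  finally show ?thesis .
qed

text \<open>\<open>Z\<close> is the pointwise limit of the maps reading only the coordinates in \<open>J L\<close>,
  each of which is constant on the finitely many cylinders of level \<open>L\<close>.\<close>

lemma measurable_Z: "Z \<in> borel_measurable coin_space"
proof (rule borel_measurable_LIMSEQ_metric)
  fix L
  show "(\<lambda>\<omega>. Z (\<lambda>j. j \<in> J L \<and> \<omega> j)) \<in> borel_measurable coin_space"
  proof (rule borel_measurableI)
    fix S :: "'a set"
    define V where "V = {v \<in> J L \<rightarrow>\<^sub>E UNIV. Z (\<lambda>j. j \<in> J L \<and> v j) \<in> S}"
    have "(\<lambda>\<omega>. Z (\<lambda>j. j \<in> J L \<and> \<omega> j)) -` S \<inter> space coin_space = (\<Union>v\<in>V. {\<omega>. restrict \<omega> (J L) = v})"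
    proof (intro set_eqI iffI)
      fix \<omega> assume "\<omega> \<in> (\<lambda>\<omega>. Z (\<lambda>j. j \<in> J L \<and> \<omega> j)) -` S \<inter> space coin_space"
      moreover have "(\<lambda>j. j \<in> J L \<and> restrict \<omega> (J L) j) = (\<lambda>j. j \<in> J L \<and> \<omega> j)"
        by auto
      ultimately show "\<omega> \<in> (\<Union>v\<in>V. {\<omega>. restrict \<omega> (J L) = v})"
        by (auto simp: V_def)
    next
      fix \<omega> assume "\<omega> \<in> (\<Union>v\<in>V. {\<omega>. restrict \<omega> (J L) = v})"
      moreover have "(\<lambda>j. j \<in> J L \<and> restrict \<omega> (J L) j) = (\<lambda>j. j \<in> J L \<and> \<omega> j)"
        by auto
      ultimately show "\<omega> \<in> (\<lambda>\<omega>. Z (\<lambda>j. j \<in> J L \<and> \<omega> j)) -` S \<inter> space coin_space"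
        by (auto simp: V_def)
    qed
    also have "\<dots> \<in> sets coin_space"
      using finite_J by (intro sets.finite_UN sets_coin_space_cylinder finite_subset[of V "J L \<rightarrow>\<^sub>E UNIV"])
        (auto simp: V_def intro: finite_PiE)
    finally show "(\<lambda>\<omega>. Z (\<lambda>j. j \<in> J L \<and> \<omega> j)) -` S \<inter> space coin_space \<in> sets coin_space" .
  qed
next
  fix \<omega> :: "nat \<Rightarrow> bool"
  have "dist (Z (\<lambda>j. j \<in> J L \<and> \<omega> j)) (Z \<omega>) \<le> c * \<rho> ^ L" for L
    by (rule dist_Z_le) auto
  then have "eventually (\<lambda>L. norm (dist (Z (\<lambda>j. j \<in> J L \<and> \<omega> j)) (Z \<omega>)) \<le> c * \<rho> ^ L) sequentially"
    by simp
  moreover have "(\<lambda>L. c * \<rho> ^ L) \<longlonglongrightarrow> 0"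
    using \<rho> by (intro tendsto_mult_right_zero LIMSEQ_power_zero) auto
  ultimately have "(\<lambda>L. dist (Z (\<lambda>j. j \<in> J L \<and> \<omega> j)) (Z \<omega>)) \<longlonglongrightarrow> 0"
    by (rule Lim_null_comparison)
  then show "(\<lambda>L. Z (\<lambda>j. j \<in> J L \<and> \<omega> j)) \<longlonglongrightarrow> Z \<omega>"
    by (rule tendsto_dist_iff[THEN iffD2])
qed

lemma ex_scale_less: "0 < \<epsilon> \<Longrightarrow> \<exists>L. c * \<rho> ^ L < \<epsilon>"
proof -
  assume "0 < \<epsilon>"
  have "(\<lambda>L. c * \<rho> ^ L) \<longlonglongrightarrow> 0"
    using \<rho> by (intro tendsto_mult_right_zero LIMSEQ_power_zero) auto
  then have "eventually (\<lambda>L. c * \<rho> ^ L < \<epsilon>) sequentially"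
    using \<open>0 < \<epsilon>\<close> by (rule order_tendstoD)
  then show ?thesis
    by (auto simp: eventually_sequentially)
qed

lemma emeasure_preimage_le_level:
  assumes U: "\<And>x y. x \<in> U \<Longrightarrow> y \<in> U \<Longrightarrow> dist x y \<le> \<rho> ^ L" and "\<sigma> \<le> dimension"
  shows "emeasure coin_space (Z -` U) \<le> ennreal (K * 2 powr B * (\<rho> ^ L) powr \<sigma>)"
proof -
  define V where "V = (\<lambda>\<omega>. restrict \<omega> (J L)) ` (Z -` U)"
  have fin: "finite V"
    unfolding V_def by (rule finite_prefixes)
  have meas: "{\<omega>. restrict \<omega> (J L) = v} \<in> sets coin_space" for v
    using finite_J by (rule sets_coin_space_cylinder)
  have "Z -` U \<subseteq> (\<Union>v\<in>V. {\<omega>. restrict \<omega> (J L) = v})"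
    by (auto simp: V_def)
  then have "emeasure coin_space (Z -` U) \<le> emeasure coin_space (\<Union>v\<in>V. {\<omega>. restrict \<omega> (J L) = v})"
    using fin meas by (intro emeasure_mono sets.finite_UN) auto
  also have "\<dots> \<le> (\<Sum>v\<in>V. emeasure coin_space {\<omega>. restrict \<omega> (J L) = v})"
    using fin meas by (intro emeasure_subadditive_finite) auto
  also have "\<dots> = (\<Sum>v\<in>V. ennreal ((1 / 2) ^ card (J L)))"
    using finite_J by (intro sum.cong refl emeasure_coin_space_cylinder) (auto simp: V_def)
  also have "\<dots> = ennreal (real (card V) * (1 / 2) ^ card (J L))"
    by (simp add: ennreal_of_nat_eq_real_of_nat ennreal_mult)
  also have "\<dots> \<le> ennreal (real K * (2 powr B * (\<rho> ^ L) powr \<sigma>))"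
    using card_prefixes_le[OF U] half_pow_card_J_le[OF assms(2)]
    by (intro ennreal_leI mult_mono) (auto simp: V_def)
  finally show ?thesis
    by (simp add: mult.assoc)
qed

lemma emeasure_preimage_singleton:
  assumes "0 < \<sigma>" "\<sigma> \<le> dimension"
  shows "emeasure coin_space (Z -` {x}) = 0"
proof -
  have "emeasure coin_space (Z -` {x}) \<le> ennreal (K * 2 powr B * (\<rho> powr \<sigma>) ^ L)" for L
    using emeasure_preimage_le_level[OF _ assms(2), of "{x}" L] \<rho> by (simp add: powr_power_commute)
  moreover have "(\<lambda>L. ennreal (K * 2 powr B * (\<rho> powr \<sigma>) ^ L)) \<longlonglongrightarrow> ennreal 0"
    using \<rho> assms(1)
    by (intro tendsto_ennrealI tendsto_mult_right_zero LIMSEQ_power_zero) (auto intro: powr_less_one_of_less_one)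
  ultimately have "emeasure coin_space (Z -` {x}) \<le> ennreal 0"
    using LIMSEQ_le_const by blast
  then show ?thesis
    by simp
qed

lemma emeasure_preimage_le_diameter:
  assumes "0 \<le> \<sigma>" "\<sigma> \<le> dimension" "bounded U" "0 < diameter U" "diameter U \<le> 1"
  shows "emeasure coin_space (Z -` U) \<le> ennreal (K * 2 powr B * \<rho> powr (- \<sigma>) * diameter U powr \<sigma>)"
proof -
  obtain L where L: "\<rho> ^ Suc L < diameter U" "diameter U \<le> \<rho> ^ L"
    using ex_power_bracket[OF \<rho> assms(4,5)] by blast
  have "dist x y \<le> \<rho> ^ L" if "x \<in> U" "y \<in> U" for x y
    using diameter_bounded_bound[OF assms(3) that] L(2) by linarith
  then have "emeasure coin_space (Z -` U) \<le> ennreal (K * 2 powr B * (\<rho> ^ L) powr \<sigma>)"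
    by (rule emeasure_preimage_le_level[OF _ assms(2)])
  also have "(\<rho> ^ L) powr \<sigma> = \<rho> powr (- \<sigma>) * (\<rho> ^ Suc L) powr \<sigma>"
    using \<rho> by (simp add: powr_mult powr_minus)
  also have "(\<rho> ^ Suc L) powr \<sigma> \<le> diameter U powr \<sigma>"
    using L(1) \<rho> assms(1) by (intro powr_mono2) auto
  finally show ?thesis
    using \<rho> by (simp add: mult.assoc ennreal_leI mult_left_mono order_trans)
qed

lemma emeasure_preimage_le:
  assumes "0 \<le> \<sigma>" "\<sigma> \<le> dimension" "bounded U" "diameter U \<le> 1"
  shows "emeasure coin_space (Z -` U) \<le> ennreal (K * 2 powr B * \<rho> powr (- \<sigma>) * diam_pow \<sigma> U)"
proof -
  consider "U = {}" | "0 < diameter U" | "U \<noteq> {}" "\<sigma> = 0" | x where "U = {x}" "0 < \<sigma>"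
  proof (cases "U = {} \<or> 0 < diameter U")
    case False
    then obtain x where "x \<in> U"
      by blast
    have "diameter U = 0"
      using False diameter_ge_0[OF assms(3)] by simp
    then have "U = {x}"
      using diameter_bounded_bound[OF assms(3)] \<open>x \<in> U\<close> by auto
    then show ?thesis
      using that(3,4) assms(1) by (cases "\<sigma> = 0") auto
  qed (use that(1,2) in blast)
  then show ?thesis
  proof cases
    case 1
    then show ?thesis by simp
  next
    case 2
    then have "diam_pow \<sigma> U = diameter U powr \<sigma>"
      by (auto simp: diam_pow_def)
    then show ?thesis
      using emeasure_preimage_le_diameter[OF assms(1-3) 2 assms(4)] by simp
  next
    case 3
    have "1 * 1 \<le> real K * 2 powr B"
      using K_pos B_nonneg by (intro mult_mono) (auto simp: ge_one_powr_ge_zero)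
    then have "1 \<le> ennreal (K * 2 powr B * \<rho> powr (- \<sigma>) * diam_pow \<sigma> U)"
      using 3 \<rho> by (simp add: diam_pow_def)
    moreover have "emeasure coin_space (Z -` U) \<le> 1"
      using prob_space.emeasure_le_1[OF prob_space_coin_space] by simp
    ultimately show ?thesis
      by (rule order_trans[rotated])
  next
    case 4
    then show ?thesis
      using emeasure_preimage_singleton assms(2) by simp
  qed
qed

lemma hausdorff_measure_range_pos:
  assumes "0 \<le> \<sigma>" "\<sigma> \<le> dimension"
  shows "0 < hausdorff_measure \<sigma> (range Z)"
proof (rule hausdorff_measure_pos_if_mass_distribution[OF prob_space_coin_space measurable_Z])
  show "0 < real K * 2 powr B * \<rho> powr - \<sigma>"
    using K_pos \<rho> by simp
  show "emeasure coin_space (Z -` U \<inter> space coin_space) \<le> ennreal (real K * 2 powr B * \<rho> powr - \<sigma> * diam_pow \<sigma> U)"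
    if "closed U" "bounded U" "diameter U \<le> 1" for U
    using emeasure_preimage_le[OF assms that(2,3)] by simp
qed auto

lemma card_separated_le:
  assumes "X \<subseteq> range Z" "pairwise (\<lambda>x y. c * \<rho> ^ L < dist x y) X"
  shows "finite X \<and> card X \<le> 2 ^ card (J L)"
proof -
  define g where "g x = restrict (inv Z x) (J L)" for x
  have Z_inv: "Z (inv Z x) = x" if "x \<in> X" for x
    using assms(1) that f_inv_into_f[of x Z UNIV] by blast
  have "inj_on g X"
  proof (rule inj_onI, rule ccontr)
    fix x y assume xy: "x \<in> X" "y \<in> X" "g x = g y" "x \<noteq> y"
    then have "dist x y \<le> c * \<rho> ^ L"
      using dist_Z_le[of "inv Z x" L "inv Z y"] Z_inv by (simp add: g_def)
    then show False
      using assms(2) xy by (auto simp: pairwise_def not_le[symmetric])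
  qed
  moreover have "g ` X \<subseteq> J L \<rightarrow>\<^sub>E UNIV"
    by (auto simp: g_def)
  moreover have "finite (J L \<rightarrow>\<^sub>E (UNIV :: bool set))"
    by (intro finite_PiE finite_J) auto
  ultimately show ?thesis
    using card_mono[of "J L \<rightarrow>\<^sub>E UNIV" "g ` X"] card_image[of g X] card_all_prefixes[of L]
    by (metis finite_imageD finite_subset)
qed

lemma separation_bounded_range: "separation_bounded (range Z)"
  unfolding separation_bounded_def
proof (intro allI impI)
  fix \<epsilon> :: real assume "0 < \<epsilon>"
  then obtain L where L: "c * \<rho> ^ L < \<epsilon>"
    using ex_scale_less by blast
  have "finite X \<and> card X \<le> 2 ^ card (J L)"
    if "X \<subseteq> range Z" "pairwise (\<lambda>x y. \<epsilon> < dist x y) X" for X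
  proof (rule card_separated_le[OF that(1)])
    show "pairwise (\<lambda>x y. c * \<rho> ^ L < dist x y) X"
      by (rule pairwise_mono[OF that(2)]) (use L in auto)
  qed
  then show "\<exists>N. \<forall>X. X \<subseteq> range Z \<longrightarrow> pairwise (\<lambda>x y. \<epsilon> < dist x y) X \<longrightarrow> finite X \<and> card X \<le> N"
    by blast
qed

lemma packing_measure_range_pos:
  assumes "0 \<le> \<sigma>" "\<sigma> \<le> dimension"
  shows "0 < packing_measure \<sigma> (range Z)"
proof (rule packing_measure_pos_if_mass_distribution[OF prob_space_coin_space measurable_Z _ assms(1)])
  show "0 < real K * 2 powr B * \<rho> powr - \<sigma>"
    using K_pos \<rho> by simp
  show "emeasure coin_space (Z -` U \<inter> space coin_space) \<le> ennreal (real K * 2 powr B * \<rho> powr - \<sigma> * diam_pow \<sigma> U)"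
    if "closed U" "bounded U" "diameter U \<le> 1" for U
    using emeasure_preimage_le[OF assms that(2,3)] by simp
qed (auto intro: separation_bounded_range)

definition cylinder_images :: "nat \<Rightarrow> 'a set set" where
  "cylinder_images L = (\<lambda>v. Z ` {\<omega>. restrict \<omega> (J L) = v}) ` (J L \<rightarrow>\<^sub>E UNIV)"

lemma card_cylinder_images: "card (cylinder_images L) \<le> 2 ^ card (J L)"
  unfolding cylinder_images_def card_all_prefixes[symmetric]
  by (intro card_image_le finite_PiE finite_J) auto

lemma fine_cover_cylinder_images: "fine_cover (c * \<rho> ^ L) (range Z) (cylinder_images L)"
  unfolding fine_cover_def
proof (intro conjI ballI)
  show "finite (cylinder_images L)"
    unfolding cylinder_images_def by (intro finite_imageI finite_PiE finite_J) auto
  show "range Z \<subseteq> \<Union> (cylinder_images L)"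
    unfolding cylinder_images_def by (auto intro!: bexI[of _ "restrict _ (J L)"])
  fix U assume "U \<in> cylinder_images L"
  then obtain v where U: "U = Z ` {\<omega>. restrict \<omega> (J L) = v}"
    by (auto simp: cylinder_images_def)
  have close: "dist x y \<le> c * \<rho> ^ L" if "x \<in> U" "y \<in> U" for x y
    using that dist_Z_le by (auto simp: U)
  then show "bounded U"
    by (rule bounded_if_dist_le)
  show "diameter U \<le> c * \<rho> ^ L"
    using close c_pos \<rho> by (intro diameter_le_dist) auto
qed

lemma pow_powr_excess: "(\<rho> ^ j) powr (- dimension) * (\<rho> ^ j) powr \<sigma> = (\<rho> powr (\<sigma> - dimension)) ^ j"
proof -
  have "(\<rho> ^ j) powr (- dimension) * (\<rho> ^ j) powr \<sigma> = (\<rho> ^ j) powr (\<sigma> - dimension)"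
    by (simp add: powr_add[symmetric])
  also have "\<dots> = (\<rho> powr (\<sigma> - dimension)) ^ j"
    using \<rho> by (simp add: powr_power_commute)
  finally show ?thesis .
qed

lemma hausdorff_measure_range_eq_0:
  assumes "dimension < \<sigma>"
  shows "hausdorff_measure \<sigma> (range Z) = 0"
proof (rule hausdorff_measure_eq_0_if_fine_covers[OF _ _ _ fine_cover_cylinder_images])
  show "0 \<le> \<sigma>"
    using assms dimension_nonneg by simp
  show "0 < c * \<rho> ^ L" for L
    using c_pos \<rho> by simp
  show "(\<lambda>L. c * \<rho> ^ L) \<longlonglongrightarrow> 0"
    using \<rho> by (intro tendsto_mult_right_zero LIMSEQ_power_zero) auto
  define q where "q = \<rho> powr (\<sigma> - dimension)"
  have q: "0 \<le> q" "q < 1"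
    using \<rho> assms by (auto simp: q_def intro: powr_less_one_of_less_one)
  have "norm (real (card (cylinder_images L)) * (c * \<rho> ^ L) powr \<sigma>) \<le> 2 powr B * c powr \<sigma> * q ^ L" for L
  proof -
    have "real (card (cylinder_images L)) * (c * \<rho> ^ L) powr \<sigma> \<le> 2 ^ card (J L) * (c * \<rho> ^ L) powr \<sigma>"
      using card_cylinder_images[of L] by (intro mult_right_mono) (auto simp flip: of_nat_power)
    also have "\<dots> \<le> 2 powr B * (\<rho> ^ L) powr (- dimension) * (c * \<rho> ^ L) powr \<sigma>"
      by (intro mult_right_mono two_pow_card_J_le) simp
    also have "\<dots> = 2 powr B * c powr \<sigma> * ((\<rho> ^ L) powr (- dimension) * (\<rho> ^ L) powr \<sigma>)"
      using c_pos \<rho> by (simp add: powr_mult)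
    also have "\<dots> = 2 powr B * c powr \<sigma> * q ^ L"
      by (simp add: pow_powr_excess q_def)
    finally show ?thesis
      by simp
  qed
  then have "eventually (\<lambda>L. norm (real (card (cylinder_images L)) * (c * \<rho> ^ L) powr \<sigma>)
                              \<le> 2 powr B * c powr \<sigma> * q ^ L) sequentially"
    by simp
  moreover have "(\<lambda>L. 2 powr B * c powr \<sigma> * q ^ L) \<longlonglongrightarrow> 0"
    using q by (intro tendsto_mult_right_zero LIMSEQ_power_zero) auto
  ultimately show "(\<lambda>L. real (card (cylinder_images L)) * (c * \<rho> ^ L) powr \<sigma>) \<longlonglongrightarrow> 0"
    by (rule Lim_null_comparison)
qed

lemma packing_measure_range_eq_0:
  assumes "dimension < \<sigma>"
  shows "packing_measure \<sigma> (range Z) = 0"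
proof -
  obtain k where k: "c * \<rho> ^ k < \<rho>"
    using ex_scale_less \<rho> by blast
  define q where "q = \<rho> powr (\<sigma> - dimension)"
  define A where "A = 2 powr B * (\<rho> ^ k) powr (- dimension) * 2 powr \<sigma>"
  have "0 \<le> \<sigma>"
    using assms dimension_nonneg by simp
  have q: "0 \<le> q" "q < 1"
    using \<rho> assms by (auto simp: q_def intro: powr_less_one_of_less_one)
  show ?thesis
  proof (rule packing_measure_eq_0_if_separated_geometric[OF \<rho> \<open>0 \<le> \<sigma>\<close> q])
    fix j X assume X: "X \<subseteq> range Z" "pairwise (\<lambda>x y. \<rho> ^ Suc j < dist x y) X"
    have "c * \<rho> ^ (j + k) \<le> \<rho> ^ Suc j"
      using k \<rho> by (simp add: power_add mult.assoc[symmetric] mult.commute[of c] mult_right_mono less_imp_le)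
    then have "pairwise (\<lambda>x y. c * \<rho> ^ (j + k) < dist x y) X"
      by (intro pairwise_mono[OF X(2)]) auto
    then have sep: "finite X \<and> card X \<le> 2 ^ card (J (j + k))"
      by (rule card_separated_le[OF X(1)])
    have "real (card X) * (2 * \<rho> ^ j) powr \<sigma> \<le> 2 ^ card (J (j + k)) * (2 * \<rho> ^ j) powr \<sigma>"
      using sep by (intro mult_right_mono) (auto simp flip: of_nat_power)
    also have "\<dots> \<le> 2 powr B * (\<rho> ^ (j + k)) powr (- dimension) * (2 * \<rho> ^ j) powr \<sigma>"
      by (intro mult_right_mono two_pow_card_J_le) simp
    also have "\<dots> = A * ((\<rho> ^ j) powr (- dimension) * (\<rho> ^ j) powr \<sigma>)"
      using \<rho> by (simp add: A_def power_add powr_mult)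
    also have "\<dots> = A * q ^ j"
      by (simp add: pow_powr_excess q_def)
    finally show "finite X \<and> real (card X) * (2 * \<rho> ^ j) powr \<sigma> \<le> A * q ^ j"
      using sep by simp
  qed
qed

lemma covering_number_range_le:
  assumes "c * \<rho> ^ L \<le> \<delta>"
  shows "covering_number \<delta> (range Z) \<le> 2 ^ card (J L)"
proof -
  have "fine_cover \<delta> (range Z) (cylinder_images L)"
    using fine_cover_cylinder_images[of L] assms by (auto simp: fine_cover_def)
  then show ?thesis
    using card_cylinder_images[of L] covering_number_le_card by (blast intro: order_trans)
qed

lemma covering_number_range_ge:
  assumes "0 < \<delta>" "\<delta> \<le> \<rho> ^ L"
  shows "2 ^ card (J L) \<le> K * covering_number \<delta> (range Z)"
proof -
  obtain L' where "c * \<rho> ^ L' < \<delta>"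
    using ex_scale_less assms(1) by blast
  then have "fine_cover \<delta> (range Z) (cylinder_images L')"
    using fine_cover_cylinder_images[of L'] by (auto simp: fine_cover_def)
  then obtain F where F: "fine_cover \<delta> (range Z) F" "card F = covering_number \<delta> (range Z)"
    by (rule obtain_minimal_fine_cover)
  then have finF: "finite F" and cov: "range Z \<subseteq> \<Union>F" and small: "\<And>U. U \<in> F \<Longrightarrow> bounded U \<and> diameter U \<le> \<delta>"
    by (auto simp: fine_cover_def)
  define pre where "pre U = (\<lambda>\<omega>. restrict \<omega> (J L)) ` (Z -` U)" for U
  have "J L \<rightarrow>\<^sub>E UNIV \<subseteq> (\<Union>U\<in>F. pre U)"
  proof
    fix v :: "nat \<Rightarrow> bool" assume v: "v \<in> J L \<rightarrow>\<^sub>E UNIV"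
    define \<omega> where "\<omega> j = (j \<in> J L \<and> v j)" for j
    have "restrict \<omega> (J L) = v"
      using v by (auto simp: \<omega>_def PiE_def extensional_def fun_eq_iff)
    moreover obtain U where "U \<in> F" "Z \<omega> \<in> U"
      using cov by blast
    ultimately show "v \<in> (\<Union>U\<in>F. pre U)"
      by (auto simp: pre_def)
  qed
  then have "card (J L \<rightarrow>\<^sub>E (UNIV :: bool set)) \<le> card (\<Union>U\<in>F. pre U)"
    using finF by (intro card_mono) (auto simp: pre_def intro: finite_prefixes)
  also have "\<dots> \<le> (\<Sum>U\<in>F. card (pre U))"
    using finF by (rule card_UN_le)
  also have "\<dots> \<le> (\<Sum>U\<in>F. K)"
  proof (rule sum_mono)
    fix U assume "U \<in> F"
    have "dist x y \<le> \<rho> ^ L" if "x \<in> U" "y \<in> U" for x y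
      using diameter_bounded_bound[OF _ that] small[OF \<open>U \<in> F\<close>] assms(2) by force
    then show "card (pre U) \<le> K"
      unfolding pre_def by (rule card_prefixes_le)
  qed
  also have "\<dots> = K * covering_number \<delta> (range Z)"
    using F(2) by simp
  finally show ?thesis
    by (simp add: card_all_prefixes)
qed

lemma covering_number_range_between:
  assumes "0 < \<delta>" "\<rho> ^ Suc L < \<delta>" "\<delta> \<le> \<rho> ^ L" and k: "c * \<rho> ^ k \<le> 1"
  shows "2 powr (- B) * (\<rho> ^ L) powr (- dimension) \<le> K * real (covering_number \<delta> (range Z))"
    and "covering_number \<delta> (range Z) \<le> 2 powr B * (\<rho> ^ (Suc L + k)) powr (- dimension)"
proof -
  have "real (2 ^ card (J L)) \<le> real (K * covering_number \<delta> (range Z))"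
    using covering_number_range_ge[OF assms(1,3)] by (rule of_nat_mono)
  then show "2 powr (- B) * (\<rho> ^ L) powr (- dimension) \<le> K * real (covering_number \<delta> (range Z))"
    using two_pow_card_J_ge[of L] by simp
  have "c * \<rho> ^ (Suc L + k) = (c * \<rho> ^ k) * \<rho> ^ Suc L"
    by (simp add: power_add)
  also have "\<dots> \<le> \<rho> ^ Suc L"
    using k \<rho> c_pos by (intro mult_left_le_one_le) auto
  finally have "c * \<rho> ^ (Suc L + k) \<le> \<delta>"
    using assms(2) by linarith
  then have "real (covering_number \<delta> (range Z)) \<le> real (2 ^ card (J (Suc L + k)))"
    by (intro of_nat_mono covering_number_range_le)
  then have "real (covering_number \<delta> (range Z)) \<le> 2 ^ card (J (Suc L + k))"
    by (simp only: of_nat_power of_nat_numeral)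
  then show "covering_number \<delta> (range Z) \<le> 2 powr B * (\<rho> ^ (Suc L + k)) powr (- dimension)"
    using two_pow_card_J_le by (rule order_trans)
qed

lemma ln_covering_number_range_bounds:
  assumes "0 < \<delta>" "\<rho> ^ Suc L < \<delta>" "\<delta> \<le> \<rho> ^ L" and k: "c * \<rho> ^ k \<le> 1"
  shows "dimension * real L * ln (1 / \<rho>) - B * ln 2 - ln K \<le> ln (covering_number \<delta> (range Z))"
    and "ln (covering_number \<delta> (range Z)) \<le> B * ln 2 + dimension * real (Suc L + k) * ln (1 / \<rho>)"
proof -
  let ?N = "real (covering_number \<delta> (range Z))"
  note lower = covering_number_range_between(1)[OF assms]
  note upper = covering_number_range_between(2)[OF assms]
  have pos: "0 < 2 powr (- B) * (\<rho> ^ L) powr (- dimension)"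
    using \<rho> by simp
  then have "0 < real K * ?N"
    using lower by linarith
  then have "0 < ?N"
    by (simp add: zero_less_mult_iff)
  have "- B * ln 2 + dimension * real L * ln (1 / \<rho>) = ln (2 powr (- B) * (\<rho> ^ L) powr (- dimension))"
    using \<rho> by (simp add: ln_mult ln_powr ln_realpow ln_div)
  also have "\<dots> \<le> ln (K * ?N)"
    using pos lower by (subst ln_le_cancel_iff) auto
  also have "\<dots> = ln K + ln ?N"
    using K_pos \<open>0 < ?N\<close> by (simp add: ln_mult)
  finally show "dimension * real L * ln (1 / \<rho>) - B * ln 2 - ln K \<le> ln ?N"
    by simp
  have "ln ?N \<le> ln (2 powr B * (\<rho> ^ (Suc L + k)) powr (- dimension))"
    using \<open>0 < ?N\<close> upper by (subst ln_le_cancel_iff) auto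
  also have "\<dots> = B * ln 2 + dimension * real (Suc L + k) * ln (1 / \<rho>)"
    using \<rho> by (simp add: ln_mult ln_powr ln_realpow ln_div algebra_simps)
  finally show "ln ?N \<le> B * ln 2 + dimension * real (Suc L + k) * ln (1 / \<rho>)" .
qed

lemma has_box_dim_range: "has_box_dim (range Z) dimension"
proof -
  obtain k where k: "c * \<rho> ^ k < 1"
    using ex_scale_less[of 1] by auto
  define \<kappa> where "\<kappa> = ln (1 / \<rho>)"
  have "0 < \<kappa>"
    using \<rho> by (simp add: \<kappa>_def)
  show ?thesis
  proof (rule has_box_dim_if_log_covering_number_close)
    fix \<delta> :: real assume \<delta>: "0 < \<delta>" "\<delta> < 1"
    obtain L where L: "\<rho> ^ Suc L < \<delta>" "\<delta> \<le> \<rho> ^ L"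
      using ex_power_bracket[OF \<rho> \<delta>(1)] \<delta>(2) by auto
    have "ln (\<rho> ^ Suc L) < ln \<delta>" "ln \<delta> \<le> ln (\<rho> ^ L)"
      using L \<delta> \<rho> by simp_all
    then have bounds: "real L * \<kappa> \<le> - ln \<delta>" "- ln \<delta> \<le> real L * \<kappa> + \<kappa>"
      using \<rho> by (simp_all add: \<kappa>_def ln_mult ln_realpow ln_div algebra_simps)
    have "dimension * (real L * \<kappa>) \<le> dimension * - ln \<delta>"
      "dimension * - ln \<delta> \<le> dimension * (real L * \<kappa> + \<kappa>)"
      using mult_left_mono[OF bounds(1) dimension_nonneg] mult_left_mono[OF bounds(2) dimension_nonneg]
      by simp_all
    then have Y: "dimension * real L * \<kappa> \<le> dimension * - ln \<delta>"
      "dimension * - ln \<delta> \<le> dimension * real L * \<kappa> + dimension * \<kappa>"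
      by (simp_all add: algebra_simps)
    have X: "dimension * real L * \<kappa> - B * ln 2 - ln K \<le> ln (covering_number \<delta> (range Z))"
      "ln (covering_number \<delta> (range Z)) \<le> B * ln 2 + dimension * real (Suc L + k) * \<kappa>"
      using ln_covering_number_range_bounds[OF \<delta>(1) L less_imp_le[OF k]] by (simp_all add: \<kappa>_def)
    have split: "dimension * real (Suc L + k) * \<kappa> = dimension * real L * \<kappa> + dimension * \<kappa> + dimension * real k * \<kappa>"
      by (simp add: algebra_simps)
    have "0 \<le> dimension * real k * \<kappa>" "0 \<le> ln (real K)" "0 \<le> B * ln 2"
      using dimension_nonneg \<open>0 < \<kappa>\<close> K_pos B_nonneg by auto
    then show "\<bar>ln (covering_number \<delta> (range Z)) - dimension * - ln \<delta>\<bar>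
                 \<le> B * ln 2 + ln K + dimension * real (Suc k) * \<kappa>"
      using X Y split by (simp add: algebra_simps abs_le_iff)
  qed
qed

theorem dimensions_range:
  "has_box_dim (range Z) dimension \<and> hausdorff_dim (range Z) = dimension \<and> packing_dim (range Z) = dimension"
  unfolding hausdorff_dim_def packing_dim_def
  using has_box_dim_range dimension_nonneg
    Inf_vanishing_exponents_eq[of dimension "\<lambda>\<sigma>. hausdorff_measure \<sigma> (range Z)"]
    Inf_vanishing_exponents_eq[of dimension "\<lambda>\<sigma>. packing_measure \<sigma> (range Z)"]
    hausdorff_measure_range_pos hausdorff_measure_range_eq_0
    packing_measure_range_pos packing_measure_range_eq_0
  by simp

end

section \<open>Gaussian integers and radix expansions in base -n + i\<close>

definition gaussian_ints :: "complex set" where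
  "gaussian_ints = {z. Re z \<in> \<int> \<and> Im z \<in> \<int>}"

lemma gaussian_ints_diff: "z \<in> gaussian_ints \<Longrightarrow> w \<in> gaussian_ints \<Longrightarrow> z - w \<in> gaussian_ints"
  by (auto simp: gaussian_ints_def)

lemma floor_Re_Im_gaussian_int:
  "z \<in> gaussian_ints \<Longrightarrow> of_int \<lfloor>Re z\<rfloor> = Re z \<and> of_int \<lfloor>Im z\<rfloor> = Im z"
  by (auto simp: gaussian_ints_def elim!: Ints_cases)

lemma card_gaussian_ints_near_le:
  fixes R :: nat
  assumes G: "G \<subseteq> gaussian_ints" and z\<^sub>0: "z\<^sub>0 \<in> gaussian_ints"
    and near: "\<And>z. z \<in> G \<Longrightarrow> cmod (z - z\<^sub>0) \<le> R"
  shows "finite G \<and> card G \<le> (2 * R + 1) ^ 2"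
proof -
  define h where "h z = (\<lfloor>Re z\<rfloor>, \<lfloor>Im z\<rfloor>)" for z
  define box where "box = {\<lfloor>Re z\<^sub>0\<rfloor> - R..\<lfloor>Re z\<^sub>0\<rfloor> + R} \<times> {\<lfloor>Im z\<^sub>0\<rfloor> - R..\<lfloor>Im z\<^sub>0\<rfloor> + R}"
  have "inj_on h G"
  proof (rule inj_onI)
    fix z w assume "z \<in> G" "w \<in> G" "h z = h w"
    then have "\<lfloor>Re z\<rfloor> = \<lfloor>Re w\<rfloor>" "\<lfloor>Im z\<rfloor> = \<lfloor>Im w\<rfloor>"
      by (simp_all add: h_def)
    moreover have "of_int \<lfloor>Re z\<rfloor> = Re z" "of_int \<lfloor>Im z\<rfloor> = Im z"
      "of_int \<lfloor>Re w\<rfloor> = Re w" "of_int \<lfloor>Im w\<rfloor> = Im w"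
      using floor_Re_Im_gaussian_int G \<open>z \<in> G\<close> \<open>w \<in> G\<close> by auto
    ultimately show "z = w"
      by (metis complex_eq_iff)
  qed
  moreover have "h ` G \<subseteq> box"
  proof (rule image_subsetI)
    fix z assume "z \<in> G"
    have "\<bar>Re (z - z\<^sub>0)\<bar> \<le> R" "\<bar>Im (z - z\<^sub>0)\<bar> \<le> R"
      using near[OF \<open>z \<in> G\<close>] abs_Re_le_cmod abs_Im_le_cmod order_trans by blast+
    moreover have "of_int \<lfloor>Re z\<rfloor> = Re z" "of_int \<lfloor>Im z\<rfloor> = Im z"
      "of_int \<lfloor>Re z\<^sub>0\<rfloor> = Re z\<^sub>0" "of_int \<lfloor>Im z\<^sub>0\<rfloor> = Im z\<^sub>0"
      using floor_Re_Im_gaussian_int z\<^sub>0 G \<open>z \<in> G\<close> by auto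
    ultimately have "\<bar>real_of_int (\<lfloor>Re z\<rfloor> - \<lfloor>Re z\<^sub>0\<rfloor>)\<bar> \<le> R" "\<bar>real_of_int (\<lfloor>Im z\<rfloor> - \<lfloor>Im z\<^sub>0\<rfloor>)\<bar> \<le> R"
      by (simp_all only: of_int_diff minus_complex.sel)
    then have "\<bar>\<lfloor>Re z\<rfloor> - \<lfloor>Re z\<^sub>0\<rfloor>\<bar> \<le> int R" "\<bar>\<lfloor>Im z\<rfloor> - \<lfloor>Im z\<^sub>0\<rfloor>\<bar> \<le> int R"
      by linarith+
    then show "h z \<in> box"
      by (auto simp: h_def box_def)
  qed
  moreover have "card {a - int R..a + int R} = 2 * R + 1" for a
    by simp
  then have "finite box" "card box = (2 * R + 1) ^ 2"
    by (simp_all add: box_def card_cartesian_product power2_eq_square)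
  ultimately show ?thesis
    by (metis card_image card_mono finite_imageD finite_subset)
qed

lemma minus_nat_plus_i_mult_eq_real:
  assumes "(- of_nat n + \<i>) * w = complex_of_real c"
  shows "c = - (real n ^ 2 + 1) * Im w"
proof -
  have "- real n * Re w - Im w = c" "Re w - real n * Im w = 0"
    using arg_cong[OF assms, of Re] arg_cong[OF assms, of Im] by simp_all
  then show ?thesis
    by (simp add: power2_eq_square algebra_simps)
qed

primrec horner :: "complex \<Rightarrow> nat \<Rightarrow> (nat \<Rightarrow> complex) \<Rightarrow> complex" where
  "horner b 0 e = 0"
| "horner b (Suc L) e = b * horner b L e + e L"

lemma horner_cong: "(\<And>j. j < L \<Longrightarrow> e j = e' j) \<Longrightarrow> horner b L e = horner b L e'"
  by (induction L) auto

lemma sum_radix_eq_horner: "b \<noteq> 0 \<Longrightarrow> (\<Sum>j<L. e j / b ^ Suc j) = horner b L e / b ^ L"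
  by (induction L) (auto simp: field_simps)

lemma horner_in_gaussian_ints:
  "b \<in> gaussian_ints \<Longrightarrow> (\<And>j. j < L \<Longrightarrow> e j \<in> gaussian_ints) \<Longrightarrow> horner b L e \<in> gaussian_ints"
  by (induction L) (auto simp: gaussian_ints_def)

lemma minus_nat_plus_i_mult_eq_small_int:
  assumes "w \<in> gaussian_ints" "(- of_nat n + \<i>) * w = of_int c" "\<bar>c\<bar> \<le> int n ^ 2"
  shows "c = 0"
proof -
  obtain y where y: "Im w = of_int y"
    using assms(1) by (auto simp: gaussian_ints_def elim: Ints_cases)
  have "real_of_int c = - (real n ^ 2 + 1) * Im w"
    using assms(2) by (intro minus_nat_plus_i_mult_eq_real) simp
  then have "real_of_int c = real_of_int (- (int n ^ 2 + 1) * y)"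
    by (simp add: y)
  then have c: "c = - (int n ^ 2 + 1) * y"
    by (rule of_int_eq_iff[THEN iffD1])
  show ?thesis
  proof (rule ccontr)
    assume "c \<noteq> 0"
    then have "y \<noteq> 0"
      using c by simp
    then have "(int n ^ 2 + 1) * 1 \<le> (int n ^ 2 + 1) * \<bar>y\<bar>"
      by (intro mult_left_mono) auto
    also have "\<dots> = \<bar>- (int n ^ 2 + 1)\<bar> * \<bar>y\<bar>"
      by (simp only: abs_minus_cancel) simp
    also have "\<dots> = \<bar>c\<bar>"
      by (simp only: c abs_mult)
    finally show False
      using assms(3) by simp
  qed
qed

lemma horner_digits_inj:
  fixes n m :: nat
  defines "b \<equiv> - of_nat n + \<i>"
  assumes "m \<le> n ^ 2"
    and e: "\<And>j. j < L \<Longrightarrow> e j \<in> {0, of_nat m}" and e': "\<And>j. j < L \<Longrightarrow> e' j \<in> {0, of_nat m}"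
    and eq: "horner b L e = horner b L e'"
  shows "j < L \<Longrightarrow> e j = e' j"
  using e e' eq
proof (induction L arbitrary: j)
  case 0
  then show ?case by simp
next
  case (Suc L)
  have digit: "x \<in> {0, of_nat m} \<Longrightarrow> x \<in> gaussian_ints" for x :: complex
    by (auto simp: gaussian_ints_def)
  have "b \<in> gaussian_ints"
    by (simp add: b_def gaussian_ints_def)
  then have gauss: "horner b L e' - horner b L e \<in> gaussian_ints"
    using digit Suc.prems(2,3) by (intro gaussian_ints_diff horner_in_gaussian_ints) auto
  obtain c :: int where c: "e L - e' L = of_int c" "\<bar>c\<bar> \<le> int m"
  proof -
    have "e L - e' L = of_int 0 \<or> e L - e' L = of_int (int m) \<or> e L - e' L = of_int (- int m)"
      using Suc.prems(2,3)[of L] by auto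
    then show ?thesis
      using that[of 0] that[of "int m"] that[of "- int m"] by auto
  qed
  have "b * (horner b L e' - horner b L e) = of_int c"
    using Suc.prems(4) c(1) by (simp add: algebra_simps)
  moreover have "\<bar>c\<bar> \<le> int n ^ 2"
    using c(2) \<open>m \<le> n ^ 2\<close> by (metis of_nat_le_iff of_nat_power order_trans)
  ultimately have "c = 0"
    using gauss unfolding b_def by (intro minus_nat_plus_i_mult_eq_small_int)
  then have eL: "e L = e' L"
    using c(1) by simp
  moreover have "b \<noteq> 0"
    by (simp add: b_def complex_eq_iff)
  ultimately have "horner b L e = horner b L e'"
    using Suc.prems(4) by simp
  then show ?case
    using Suc eL by (cases "j = L") auto
qed

lemma radix_tail_bound:
  fixes b :: complex and e :: "nat \<Rightarrow> complex"
  assumes b: "2 \<le> cmod b" and eM: "\<And>j. cmod (e j) \<le> M" and e0: "\<And>j. j < L \<Longrightarrow> e j = 0"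
  shows "summable (\<lambda>j. e j / b ^ Suc j)" "cmod (\<Sum>j. e j / b ^ Suc j) \<le> M / cmod b ^ L"
proof -
  define r where "r = cmod b"
  have r: "2 \<le> r" "0 < r"
    using b by (auto simp: r_def)
  have q: "norm (1 / r) < 1"
    using r by simp
  have "0 \<le> M"
    using eM[of 0] norm_ge_zero order_trans by blast
  have term_le: "cmod (e j / b ^ Suc j) \<le> M * (1 / r) ^ Suc j" for j
    using eM[of j] r by (simp add: norm_divide norm_power r_def power_one_over divide_right_mono del: power_Suc)
  have geo: "summable (\<lambda>j. M * (1 / r) ^ Suc (j + L))"
    using q by (intro summable_mult summable_Suc_iff[THEN iffD2] summable_ignore_initial_segment summable_geometric)
  have "summable (\<lambda>j. M * (1 / r) ^ Suc j)"
    using q by (intro summable_mult summable_Suc_iff[THEN iffD2] summable_geometric)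
  then show sm: "summable (\<lambda>j. e j / b ^ Suc j)"
    by (rule summable_comparison_test'[of _ 0]) (use term_le in auto)
  have tail: "summable (\<lambda>j. cmod (e (j + L) / b ^ Suc (j + L)))"
    by (rule summable_comparison_test'[OF geo, of 0]) (use term_le in auto)
  have "(\<Sum>j. e j / b ^ Suc j) = (\<Sum>j. e (j + L) / b ^ Suc (j + L))"
    using suminf_split_initial_segment[OF sm, of L] e0 by simp
  then have "cmod (\<Sum>j. e j / b ^ Suc j) \<le> (\<Sum>j. cmod (e (j + L) / b ^ Suc (j + L)))"
    using summable_norm[OF tail] by simp
  also have "\<dots> \<le> (\<Sum>j. M * (1 / r) ^ Suc (j + L))"
    using tail geo term_le by (intro suminf_le) auto
  also have "\<dots> = M * (1 / r) ^ Suc L * (\<Sum>j. (1 / r) ^ j)"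
    by (subst suminf_mult[symmetric]) (use q in \<open>auto simp: power_add summable_geometric ac_simps\<close>)
  also have "\<dots> = M * (1 / r) ^ Suc L * (1 / (1 - 1 / r))"
    by (subst suminf_geometric[OF q]) (rule refl)
  also have "\<dots> = M / r ^ L * (1 / (r - 1))"
    using r by (simp add: field_simps power_divide)
  also have "\<dots> \<le> M / r ^ L"
    using r \<open>0 \<le> M\<close> by (intro mult_left_le) (auto simp: field_simps)
  finally show "cmod (\<Sum>j. e j / b ^ Suc j) \<le> M / cmod b ^ L"
    by (simp add: r_def)
qed

section \<open>The intersection C \<inter> (C + \<alpha>)\<close>

locale radix_intersection =
  fixes n m :: nat and s :: "nat \<Rightarrow> int"
  assumes n_ge_2: "2 \<le> n" and m_pos: "0 < m" and m_le: "m \<le> n ^ 2"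
    and s_digits: "s j \<in> {0, int m, - int m}"
begin

definition base :: complex where
  "base = - of_nat n + \<i>"

definition free :: "nat \<Rightarrow> nat set" where
  "free L = {j. j < L \<and> s j = 0}"

text \<open>If \<open>z\<close> and \<open>z - \<alpha>\<close> have digits \<open>d\<^sub>j, d'\<^sub>j \<in> {0, m}\<close>, uniqueness of the expansion of \<open>\<alpha>\<close>
  forces \<open>d\<^sub>j - d'\<^sub>j = s j\<close>: so \<open>d\<^sub>j = m\<close> if \<open>s j = m\<close>, \<open>d\<^sub>j = 0\<close> if \<open>s j = -m\<close>, and \<open>d\<^sub>j\<close> is free if \<open>s j = 0\<close>.\<close>

definition digit :: "nat \<Rightarrow> bool \<Rightarrow> complex" where
  "digit j x = (if s j = int m \<or> (s j = 0 \<and> x) then of_nat m else 0)"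

definition point :: "(nat \<Rightarrow> bool) \<Rightarrow> complex" where
  "point \<omega> = (\<Sum>j. digit j (\<omega> j) / base ^ Suc j)"

definition prefix_value :: "nat \<Rightarrow> (nat \<Rightarrow> bool) \<Rightarrow> complex" where
  "prefix_value L \<omega> = horner base L (\<lambda>j. digit j (\<omega> j))"

lemma norm_base_ge_2: "2 \<le> cmod base"
proof -
  have "(2::real) ^ 2 \<le> real n ^ 2 + 1"
    using n_ge_2 power_mono[of 2 "real n" 2] by simp
  then show ?thesis
    by (simp add: base_def cmod_def real_le_rsqrt)
qed

lemma base_nonzero: "base \<noteq> 0"
  using norm_base_ge_2 by auto

lemma digit_in: "digit j x \<in> {0, of_nat m}"
  by (simp add: digit_def)

lemma norm_digit_le: "cmod (digit j x) \<le> m"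
  by (simp add: digit_def)

lemma digit_free_inj: "s j = 0 \<Longrightarrow> digit j x = digit j y \<Longrightarrow> x = y"
  using m_pos by (auto simp: digit_def split: if_splits)

lemma digit_not_free: "s j \<noteq> 0 \<Longrightarrow> digit j x = digit j y"
  by (simp add: digit_def)

lemma summable_radix: "(\<And>j. cmod (e j) \<le> m) \<Longrightarrow> summable (\<lambda>j. e j / base ^ Suc j)"
  using radix_tail_bound(1)[OF norm_base_ge_2, of e m 0] by simp

lemma suminf_radix_diff:
  assumes "\<And>j. cmod (d j) \<le> m" "\<And>j. cmod (d' j) \<le> m"
  shows "(\<Sum>j. d j / base ^ Suc j) - (\<Sum>j. d' j / base ^ Suc j) = (\<Sum>j. (d j - d' j) / base ^ Suc j)"
  using suminf_diff[OF summable_radix[OF assms(1)] summable_radix[OF assms(2)]]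
  by (simp add: diff_divide_distrib)

lemma dist_point_same_prefix:
  assumes "restrict \<omega> (free L) = restrict \<omega>' (free L)"
  shows "dist (point \<omega>) (point \<omega>') \<le> m * (1 / cmod base) ^ L"
proof -
  let ?e = "\<lambda>j. digit j (\<omega> j) - digit j (\<omega>' j)"
  have e0: "?e j = 0" if "j < L" for j
  proof (cases "s j = 0")
    case True
    then have "\<omega> j = \<omega>' j"
      using that fun_cong[OF assms, of j] by (auto simp: free_def)
    then show ?thesis by simp
  qed (simp add: digit_not_free)
  have eM: "cmod (?e j) \<le> m" for j
    using digit_in[of j "\<omega> j"] digit_in[of j "\<omega>' j"] by auto
  have "cmod (\<Sum>j. ?e j / base ^ Suc j) \<le> m / cmod base ^ L"
    by (intro radix_tail_bound(2)[OF norm_base_ge_2]) (use e0 eM in auto)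
  then show ?thesis
    using suminf_radix_diff[OF norm_digit_le norm_digit_le]
    by (simp add: dist_norm point_def power_one_over)
qed

lemma dist_point_prefix_value:
  "cmod (point \<omega> - prefix_value L \<omega> / base ^ L) \<le> m * (1 / cmod base) ^ L"
proof -
  let ?d = "\<lambda>j. digit j (\<omega> j) / base ^ Suc j"
  let ?e = "\<lambda>j. if j < L then 0 else digit j (\<omega> j)"
  have tail: "(\<lambda>j. ?e j / base ^ Suc j) sums (\<Sum>j. ?e j / base ^ Suc j)"
    using norm_digit_le by (intro summable_sums summable_radix) auto
  have head: "(\<lambda>j. if j < L then ?d j else 0) sums (\<Sum>j<L. ?d j)"
    using sums_If_finite_set[of "{..<L}" ?d] by (simp add: lessThan_def)
  have split: "(\<lambda>j. ?e j / base ^ Suc j + (if j < L then ?d j else 0)) = ?d"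
    by (auto simp: fun_eq_iff)
  have "?d sums ((\<Sum>j. ?e j / base ^ Suc j) + (\<Sum>j<L. ?d j))"
    using sums_add[OF tail head] unfolding split .
  then have "point \<omega> - prefix_value L \<omega> / base ^ L = (\<Sum>j. ?e j / base ^ Suc j)"
    by (simp add: point_def prefix_value_def sum_radix_eq_horner[OF base_nonzero, symmetric] sums_iff)
  also have "cmod \<dots> \<le> m / cmod base ^ L"
    using norm_digit_le by (intro radix_tail_bound(2)[OF norm_base_ge_2]) auto
  finally show ?thesis
    by (simp add: power_one_over)
qed

lemma prefix_value_restrict: "prefix_value L (restrict \<omega> (free L)) = prefix_value L \<omega>"
  unfolding prefix_value_def
proof (rule horner_cong)
  fix j assume "j < L"
  show "digit j (restrict \<omega> (free L) j) = digit j (\<omega> j)"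
  proof (cases "s j = 0")
    case True
    then show ?thesis
      using \<open>j < L\<close> by (simp add: free_def)
  next
    case False
    then show ?thesis
      by (rule digit_not_free)
  qed
qed

lemma inj_on_prefix_value: "inj_on (prefix_value L) (free L \<rightarrow>\<^sub>E UNIV)"
proof (rule inj_onI)
  fix v v' assume v: "v \<in> free L \<rightarrow>\<^sub>E UNIV" and v': "v' \<in> free L \<rightarrow>\<^sub>E UNIV"
    and eq: "prefix_value L v = prefix_value L v'"
  have "horner (- of_nat n + \<i>) L (\<lambda>j. digit j (v j)) = horner (- of_nat n + \<i>) L (\<lambda>j. digit j (v' j))"
    using eq unfolding prefix_value_def base_def .
  then have digits: "digit j (v j) = digit j (v' j)" if "j < L" for j
    using horner_digits_inj[where e = "\<lambda>j. digit j (v j)" and e' = "\<lambda>j. digit j (v' j)", OF m_le digit_in digit_in]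
      that by blast
  show "v = v'"
  proof
    fix j
    show "v j = v' j"
    proof (cases "j \<in> free L")
      case True
      then show ?thesis
        using digit_free_inj[of j "v j" "v' j"] digits[of j] by (simp add: free_def)
    next
      case False
      then show ?thesis
        using v v' by (auto simp: PiE_def extensional_def)
    qed
  qed
qed

lemma norm_prefix_value_diff_le:
  assumes "dist (point \<omega>) (point \<omega>') \<le> (1 / cmod base) ^ L"
  shows "cmod (prefix_value L \<omega> - prefix_value L \<omega>') \<le> 2 * m + 1"
proof -
  let ?x = "prefix_value L \<omega> / base ^ L" and ?x' = "prefix_value L \<omega>' / base ^ L"
  have decomp: "?x - ?x' = - (point \<omega> - ?x) + (point \<omega> - point \<omega>') + (point \<omega>' - ?x')"
    by simp
  have triangle: "cmod (a + b + c) \<le> cmod a + cmod b + cmod c" for a b c :: complex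
    using norm_triangle_ineq[of "a + b" c] norm_triangle_ineq[of a b] by linarith
  have "cmod (?x - ?x') \<le> cmod (- (point \<omega> - ?x)) + cmod (point \<omega> - point \<omega>') + cmod (point \<omega>' - ?x')"
    unfolding decomp by (rule triangle)
  then have "cmod (?x - ?x') \<le> cmod (point \<omega> - ?x) + dist (point \<omega>) (point \<omega>') + cmod (point \<omega>' - ?x')"
    by (simp only: norm_minus_cancel dist_norm)
  also have "\<dots> \<le> (2 * m + 1) * (1 / cmod base) ^ L"
    using dist_point_prefix_value[of \<omega> L] dist_point_prefix_value[of \<omega>' L] assms
    by (simp add: algebra_simps)
  finally have "cmod (prefix_value L \<omega> - prefix_value L \<omega>') / cmod base ^ L \<le> (2 * m + 1) / cmod base ^ L"
    by (simp add: diff_divide_distrib[symmetric] norm_divide norm_power power_one_over)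
  then show ?thesis
    using base_nonzero by (simp add: divide_le_cancel)
qed

lemma card_prefixes_point_le:
  assumes U: "\<And>x y. x \<in> U \<Longrightarrow> y \<in> U \<Longrightarrow> dist x y \<le> (1 / cmod base) ^ L"
  shows "card ((\<lambda>\<omega>. restrict \<omega> (free L)) ` (point -` U)) \<le> (4 * m + 3) ^ 2"
proof (cases "point -` U = {}")
  case False
  then obtain \<omega>\<^sub>0 where "point \<omega>\<^sub>0 \<in> U"
    by blast
  let ?P = "(\<lambda>\<omega>. restrict \<omega> (free L)) ` (point -` U)"
  have P: "?P \<subseteq> free L \<rightarrow>\<^sub>E UNIV"
    by auto
  have gauss: "prefix_value L v \<in> gaussian_ints" for v
    unfolding prefix_value_def
    by (rule horner_in_gaussian_ints) (auto simp: base_def gaussian_ints_def digit_def)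
  have near: "cmod (z - prefix_value L \<omega>\<^sub>0) \<le> real (2 * m + 1)" if "z \<in> prefix_value L ` ?P" for z
  proof -
    obtain \<omega> where "point \<omega> \<in> U" "z = prefix_value L \<omega>"
      using \<open>z \<in> _\<close> by (auto simp: prefix_value_restrict)
    then show ?thesis
      using norm_prefix_value_diff_le U \<open>point \<omega>\<^sub>0 \<in> U\<close> by simp
  qed
  have "card ?P = card (prefix_value L ` ?P)"
    using inj_on_subset[OF inj_on_prefix_value P] by (simp add: card_image)
  also have "\<dots> \<le> (2 * (2 * m + 1) + 1) ^ 2"
    using card_gaussian_ints_near_le[OF _ gauss near] gauss by blast
  also have "(2 * (2 * m + 1) + 1) ^ 2 = (4 * m + 3) ^ 2"
    by (rule arg_cong[of _ _ "\<lambda>x. x ^ 2"]) simp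
  finally show ?thesis .
qed simp

lemma cantor_coding_point:
  assumes "\<And>L. \<bar>real (card (free L)) - f * real L\<bar> \<le> B"
  shows "cantor_coding point free (1 / cmod base) m ((4 * m + 3) ^ 2) f B"
proof
  show "finite (free L)" for L
    by (simp add: free_def)
  show "0 < 1 / cmod base"
    using base_nonzero by simp
  show "1 / cmod base < 1"
    using norm_base_ge_2 by (simp add: divide_less_eq)
  show "0 < real m"
    using m_pos by simp
  show "dist (point \<omega>) (point \<omega>') \<le> real m * (1 / cmod base) ^ L"
    if "restrict \<omega> (free L) = restrict \<omega>' (free L)" for \<omega> \<omega>' L
    using that by (rule dist_point_same_prefix)
  show "card ((\<lambda>\<omega>. restrict \<omega> (free L)) ` (point -` U)) \<le> (4 * m + 3) ^ 2"
    if "\<And>x y. x \<in> U \<Longrightarrow> y \<in> U \<Longrightarrow> dist x y \<le> (1 / cmod base) ^ L" for U L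
    using that by (rule card_prefixes_point_le)
qed (rule assms)

lemma digit_eq_of_diff:
  assumes "d \<in> {0, of_nat m}" "d' \<in> {0, of_nat m}" "d - d' = of_int (s j)"
  shows "d = digit j (d = of_nat m)"
  using assms s_digits[of j] m_pos by (auto simp: digit_def)

lemma digit_minus_s_in: "digit j x - of_int (s j) \<in> {0, of_nat m}"
  using s_digits[of j] by (auto simp: digit_def)

lemma norm_of_int_s_le: "cmod (of_int (s j)) \<le> m"
  using s_digits[of j] by auto

lemma intersection_subset_range_point:
  assumes uniq: "\<forall>t. (\<forall>j. t j \<in> {0, int m, - int m}) \<and> \<alpha> = (\<Sum>j. of_int (t j) / base ^ Suc j) \<longrightarrow> t = s"
  shows "radix_set base {0, of_nat m} \<inter> (\<lambda>z. z + \<alpha>) ` radix_set base {0, of_nat m} \<subseteq> range point"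
proof
  fix z assume "z \<in> radix_set base {0, of_nat m} \<inter> (\<lambda>z. z + \<alpha>) ` radix_set base {0, of_nat m}"
  then obtain d d' where d: "\<And>j. d j \<in> {0, of_nat m}" "z = (\<Sum>j. d j / base ^ Suc j)"
    and d': "\<And>j. d' j \<in> {0, of_nat m}" "z = (\<Sum>j. d' j / base ^ Suc j) + \<alpha>"
    by (auto simp: radix_set_def)
  define t where "t j = (if d j = of_nat m then int m else 0) - (if d' j = of_nat m then int m else 0)" for j
  have t: "of_int (t j) = d j - d' j" for j
    using d(1)[of j] d'(1)[of j] m_pos by (auto simp: t_def)
  have bounded: "cmod (d j) \<le> m" "cmod (d' j) \<le> m" for j
    using d(1)[of j] d'(1)[of j] by auto
  have "\<alpha> = z - (\<Sum>j. d' j / base ^ Suc j)"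
    using d'(2) by simp
  also have "\<dots> = (\<Sum>j. d j / base ^ Suc j) - (\<Sum>j. d' j / base ^ Suc j)"
    using d(2) by simp
  also have "\<dots> = (\<Sum>j. of_int (t j) / base ^ Suc j)"
    using suminf_radix_diff[OF bounded] by (simp add: t)
  finally have "t = s"
    using uniq by (auto simp: t_def)
  then have "d j = digit j (d j = of_nat m)" for j
    using digit_eq_of_diff[OF d(1) d'(1)] t by simp
  then have "z = point (\<lambda>j. d j = of_nat m)"
    unfolding d(2) point_def by simp
  then show "z \<in> range point"
    by blast
qed

lemma range_point_subset_intersection:
  assumes \<alpha>: "\<alpha> = (\<Sum>j. of_int (s j) / base ^ Suc j)"
  shows "range point \<subseteq> radix_set base {0, of_nat m} \<inter> (\<lambda>z. z + \<alpha>) ` radix_set base {0, of_nat m}"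
proof -
  have "point \<omega> \<in> radix_set base {0, of_nat m}" for \<omega>
    unfolding radix_set_def point_def
    by (rule CollectI, rule exI[of _ "\<lambda>j. digit j (\<omega> j)"]) (auto simp: digit_def)
  moreover have "point \<omega> \<in> (\<lambda>z. z + \<alpha>) ` radix_set base {0, of_nat m}" for \<omega>
  proof -
    have "point \<omega> - \<alpha> = (\<Sum>j. (digit j (\<omega> j) - of_int (s j)) / base ^ Suc j)"
      unfolding point_def \<alpha> by (rule suminf_radix_diff[OF norm_digit_le norm_of_int_s_le])
    then have "point \<omega> - \<alpha> \<in> radix_set base {0, of_nat m}"
      unfolding radix_set_def
      by (intro CollectI exI[of _ "\<lambda>j. digit j (\<omega> j) - of_int (s j)"] conjI allI digit_minus_s_in)
    then show ?thesis
      by (rule rev_image_eqI) simp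
  qed
  ultimately show ?thesis
    by blast
qed

end

section \<open>Counting zeros of eventually periodic sequences\<close>

lemma card_less_add:
  fixes Q :: "nat \<Rightarrow> bool"
  shows "card {j. j < a + N \<and> Q j} = card {j. j < a \<and> Q j} + card {j. j < N \<and> Q (a + j)}"
proof -
  have split: "{j. j < a + N \<and> Q j} = {j. j < a \<and> Q j} \<union> (\<lambda>j. a + j) ` {j. j < N \<and> Q (a + j)}"
  proof (intro set_eqI iffI)
    fix j assume "j \<in> {j. j < a + N \<and> Q j}"
    then show "j \<in> {j. j < a \<and> Q j} \<union> (\<lambda>j. a + j) ` {j. j < N \<and> Q (a + j)}"
      by (cases "j < a") (auto intro!: image_eqI[of _ _ "j - a"])
  qed auto
  have "card {j. j < a + N \<and> Q j} = card {j. j < a \<and> Q j} + card ((\<lambda>j. a + j) ` {j. j < N \<and> Q (a + j)})"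
    unfolding split by (rule card_Un_disjoint) auto
  also have "card ((\<lambda>j. a + j) ` {j. j < N \<and> Q (a + j)}) = card {j. j < N \<and> Q (a + j)}"
    by (rule card_image) (simp add: inj_on_def)
  finally show ?thesis .
qed

lemma card_less_periodic_close:
  fixes Q :: "nat \<Rightarrow> bool"
  assumes "0 < p" and per: "\<And>j. Q (j + p) = Q j"
  defines "F \<equiv> card {j. j < p \<and> Q j}"
  shows "\<bar>real (card {j. j < N \<and> Q j}) - real F / real p * real N\<bar> \<le> real p"
proof -
  have blocks: "card {j. j < k * p + r \<and> Q j} = k * F + card {j. j < r \<and> Q j}" for k r
  proof (induction k)
    case (Suc k)
    have "card {j. j < Suc k * p + r \<and> Q j} = card {j. j < p + (k * p + r) \<and> Q j}"
      by (simp add: algebra_simps)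
    also have "\<dots> = F + card {j. j < k * p + r \<and> Q (p + j)}"
      unfolding F_def by (rule card_less_add)
    also have "{j. j < k * p + r \<and> Q (p + j)} = {j. j < k * p + r \<and> Q j}"
      using per by (simp add: add.commute)
    finally show ?case
      using Suc.IH by simp
  qed simp
  define k r where "k = N div p" and "r = N mod p"
  have N: "N = k * p + r" and "r < p"
    using \<open>0 < p\<close> by (simp_all add: k_def r_def)
  have "F \<le> p" "card {j. j < r \<and> Q j} \<le> r"
    unfolding F_def by (auto intro: card_mono[of "{..<p}", simplified] card_mono[of "{..<r}", simplified])
  have linear: "real F / real p * real N = real (k * F) + real F * real r / real p"
    using \<open>0 < p\<close> by (simp add: N field_simps)
  have "real F * real r / real p \<le> real r"
    using \<open>F \<le> p\<close> \<open>0 < p\<close> by (simp add: field_simps mult_right_mono)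
  moreover have "0 \<le> real F * real r / real p"
    by simp
  moreover have "real (card {j. j < N \<and> Q j}) = real (k * F) + real (card {j. j < r \<and> Q j})"
    using blocks[of k r] by (simp only: N of_nat_add)
  ultimately show ?thesis
    unfolding abs_le_iff linear using \<open>card {j. j < r \<and> Q j} \<le> r\<close> \<open>r < p\<close> by linarith
qed

lemma card_less_eventually_periodic_close:
  fixes P :: "nat \<Rightarrow> bool"
  assumes "0 < p" and per: "\<And>j. j\<^sub>0 \<le> j \<Longrightarrow> P (j + p) = P j"
  defines "F \<equiv> card {l. l < p \<and> P (j\<^sub>0 + l)}"
  shows "\<bar>real (card {j. j < L \<and> P j}) - real F / real p * real L\<bar> \<le> real j\<^sub>0 + real p"
proof -
  have "F \<le> p"
    unfolding F_def by (rule card_mono[of "{..<p}", simplified]) auto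
  then have slope: "0 \<le> real F / real p" "real F / real p \<le> 1"
    using \<open>0 < p\<close> by auto
  have count_le: "card {j. j < N \<and> P j} \<le> N" for N
    by (rule card_mono[of "{..<N}", simplified]) auto
  show ?thesis
  proof (cases "j\<^sub>0 \<le> L")
    case True
    define N where "N = L - j\<^sub>0"
    have L: "L = j\<^sub>0 + N"
      using True by (simp add: N_def)
    have "P (j\<^sub>0 + (l + p)) = P (j\<^sub>0 + l)" for l
      using per[of "j\<^sub>0 + l"] by (simp add: add.assoc)
    then have "\<bar>real (card {l. l < N \<and> P (j\<^sub>0 + l)}) - real F / real p * real N\<bar> \<le> real p"
      unfolding F_def by (intro card_less_periodic_close[OF \<open>0 < p\<close>])
    moreover have "card {j. j < L \<and> P j} = card {j. j < j\<^sub>0 \<and> P j} + card {l. l < N \<and> P (j\<^sub>0 + l)}"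
      unfolding L by (rule card_less_add)
    moreover have "real F / real p * real L = real F / real p * real j\<^sub>0 + real F / real p * real N"
      by (simp add: L distrib_left)
    moreover have "real F / real p * real j\<^sub>0 \<le> real j\<^sub>0"
      by (rule mult_left_le_one_le) (use slope in auto)
    moreover have "0 \<le> real F / real p * real j\<^sub>0"
      using slope by simp
    ultimately show ?thesis
      using count_le[of j\<^sub>0] unfolding abs_le_iff by linarith
  next
    case False
    have "real F / real p * real L \<le> real L"
      by (rule mult_left_le_one_le) (use slope in auto)
    moreover have "0 \<le> real F / real p * real L"
      using slope by simp
    ultimately show ?thesis
      using count_le[of L] False unfolding abs_le_iff by linarith
  qed
qed

lemma defect_eq_if_zero:
  "s \<in> {0, int m, - int m} \<Longrightarrow> int m - \<bar>s\<bar> = (if s = 0 then int m else 0)"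
  by auto

lemma zeros_eventually_periodic:
  fixes s a :: "nat \<Rightarrow> int" and u :: "nat \<Rightarrow> nat"
  assumes s: "\<forall>j. s j \<in> {0, int m, - int m}" and "0 < m"
    and per: "\<forall>j \<ge> p. int m - \<bar>s j\<bar> = a ((j - p) mod p) + int (u ((j - p) mod p))"
    and "p \<le> j"
  shows "(s (j + p) = 0) = (s j = 0)"
proof -
  have "(j - p) mod p = j mod p"
    using \<open>p \<le> j\<close> by (simp add: le_mod_geq)
  then have "int m - \<bar>s (j + p)\<bar> = int m - \<bar>s j\<bar>"
    using per \<open>p \<le> j\<close> by simp
  then show ?thesis
    using defect_eq_if_zero[of "s j" m] defect_eq_if_zero[of "s (j + p)" m] s \<open>0 < m\<close>
    by (simp split: if_splits)
qed

lemma sum_period_eq_card_zeros: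
  fixes s a :: "nat \<Rightarrow> int" and u :: "nat \<Rightarrow> nat"
  assumes s: "\<forall>j. s j \<in> {0, int m, - int m}"
    and per: "\<forall>j \<ge> p. int m - \<bar>s j\<bar> = a ((j - p) mod p) + int (u ((j - p) mod p))"
  shows "(\<Sum>l<p. real_of_int (a l + int (u l))) = real m * real (card {l. l < p \<and> s (p + l) = 0})"
proof -
  have "a l + int (u l) = (if s (p + l) = 0 then int m else 0)" if "l < p" for l
    using per[rule_format, of "p + l"] that defect_eq_if_zero[of "s (p + l)" m] s by simp
  then have "(\<Sum>l<p. real_of_int (a l + int (u l))) = (\<Sum>l<p. if s (p + l) = 0 then real m else 0)"
    by (intro sum.cong) auto
  also have "{l. l < p \<and> s (p + l) = 0} = {..<p} \<inter> {l. s (p + l) = 0}"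
    by auto
  then have "(\<Sum>l<p. if s (p + l) = 0 then real m else 0) = real m * real (card {l. l < p \<and> s (p + l) = 0})"
    by (simp add: sum.If_cases)
  finally show ?thesis .
qed

theorem corollary5p13:
  fixes n m :: nat and \<alpha> :: complex and s :: "nat \<Rightarrow> int"
    and p :: nat and a :: "nat \<Rightarrow> int" and u :: "nat \<Rightarrow> nat"
  defines "b \<equiv> - of_nat n + \<i>"
      and "D \<equiv> {0, of_nat m} :: complex set"
  assumes hn: "n \<ge> 2"
    and hm: "2 \<le> m" "m \<le> n ^ 2"
    and h\<alpha>E: "\<alpha> \<in> radix_diff_set b D"
    and hs: "\<forall>j. s j \<in> {0, int m, - int m}"
    and hsum: "\<alpha> = (\<Sum>j. of_int (s j) / b ^ Suc j)"
    and huniq: "\<forall>t :: nat \<Rightarrow> int. (\<forall>j. t j \<in> {0, int m, - int m}) \<and>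
                   \<alpha> = (\<Sum>j. of_int (t j) / b ^ Suc j) \<longrightarrow> t = s"
    and hp: "p \<ge> 1"
    and hpre: "\<forall>j < p. int m - \<bar>s j\<bar> = a j"
    and hper: "\<forall>j \<ge> p. int m - \<bar>s j\<bar> = a ((j - p) mod p) + int (u ((j - p) mod p))"
  shows "has_box_dim (radix_set b D \<inter> (\<lambda>z. z + \<alpha>) ` radix_set b D)
           (ln 2 * (\<Sum>l<p. real_of_int (a l + int (u l))) / (real m * real p * ln (cmod b)))
       \<and> hausdorff_dim (radix_set b D \<inter> (\<lambda>z. z + \<alpha>) ` radix_set b D)
           = ln 2 * (\<Sum>l<p. real_of_int (a l + int (u l))) / (real m * real p * ln (cmod b))
       \<and> packing_dim (radix_set b D \<inter> (\<lambda>z. z + \<alpha>) ` radix_set b D)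
           = ln 2 * (\<Sum>l<p. real_of_int (a l + int (u l))) / (real m * real p * ln (cmod b))"
proof -
  interpret radix_intersection n m s
    using hn hm hs by unfold_locales auto
  define F where "F = card {l. l < p \<and> s (p + l) = 0}"
  have "\<bar>real (card (free L)) - real F / real p * real L\<bar> \<le> real p + real p" for L
    using card_less_eventually_periodic_close[of p p "\<lambda>j. s j = 0" L] hp
      zeros_eventually_periodic[OF hs _ hper] hm(1)
    by (simp add: free_def F_def)
  then interpret cantor_coding point free "1 / cmod base" m "(4 * m + 3) ^ 2" "real F / real p" "real p + real p"
    by (rule cantor_coding_point)
  have base: "base = b"
    by (simp add: base_def b_def)
  have set: "radix_set b D \<inter> (\<lambda>z. z + \<alpha>) ` radix_set b D = range point"
    using intersection_subset_range_point[OF huniq[folded base]]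
      range_point_subset_intersection[OF hsum[folded base]]
    unfolding base D_def by blast
  have "dimension = ln 2 * (\<Sum>l<p. real_of_int (a l + int (u l))) / (real m * real p * ln (cmod b))"
    using sum_period_eq_card_zeros[OF hs hper, folded F_def] hm(1) unfolding dimension_def by (simp add: base)
  then show ?thesis
    using dimensions_range unfolding set by simp
qed

end
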